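(* Let $C\subseteq\mathbb{R}^n$ be prox-regular at a point $\bar x\in C$. Then $C$ is smoothly approximately convex at $\bar x$. Moreover, for every $\epsilon>0$ there exists $\delta>0$ such that for all $x,x'\in C\cap B_\delta(\bar x)$, every averaging map $\gamma:[0,1]\to C$ in the metric space $(C,d_C)$ from $x$ to $x'$ is an $\epsilon$-path from $x$ to $x'$.
   Context: For $\bar x\in C$, the regular normal cone $\widehat N_C(\bar x)$ is the set of $v$ with $\langle v,x-\bar x\rangle\le o(\|x-\bar x\|)$ for $x\in C$; the normal cone $N_C(\bar x)$ is the set of limits $v=\lim v_k$ with $v_k\in\widehat N_C(x_k)$, $x_k\in C$, $x_k\to\bar x$. $C$ is locally closed at $\bar x$ if $C\cap\overline B$ is closed for some closed ball $\overline B$ centered at $\bar x$. $C$ is prox-regular at $\bar x$ if it is locally closed there and for every $\bar v\in N_C(\bar x)$ there are $\epsilon,\rho>0$ with $\langle v,x'-x\rangle\le\rho\|x'-x\|^2$ for all $x,x'\in C\cap B_\epsilon(\bar x)$ and $v\in N_C(x)\cap B_\epsilon(\bar v)$. The length of a curve and the intrinsic distance $d_C(x,y)$ (infimum of Euclidean lengths of curves in $C$ from $x$ to $y$) are the usual ones. An averaging map in $(C,d_C)$ from $x$ to $x'$ is a curve $\gamma:[0,1]\to C$ with $\gamma(0)=x,\gamma(1)=x'$ and $d_C(\gamma(t_1),\gamma(t_2))=|t_1-t_2|\,d_C(x,x')$ for all $t_1,t_2\in[0,1]$. A smooth curve segment $\gamma:[0,1]\to C$ is one extending to a $\mathcal{C}^{(1)}$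 map on an open neighborhood of $[0,1]$. An $\epsilon$-path from $x$ to $x'$ is a smooth curve segment $\gamma:[0,1]\to C$ with $\gamma(0)=x,\gamma(1)=x'$ and $\|\gamma'(t)-(x'-x)\|\le\epsilon\|x'-x\|$ for all $t\in[0,1]$. $C$ is smoothly approximately convex at $\bar x$ if for every $\epsilon>0$ there is a neighborhood $W$ of $\bar x$ such that any $x,x'\in C\cap W$ are joined by an $\epsilon$-path. *)

theory Defs
  imports "HOL-Analysis.Analysis"
begin

definition reg_normal_cone :: "'a::euclidean_space set \<Rightarrow> 'a \<Rightarrow> 'a set" where
  "reg_normal_cone C xb =
     (if xb \<in> C then
        {v. \<forall>e>0. \<exists>d>0. \<forall>x\<in>C. norm (x - xb) < d \<longrightarrow> inner v (x - xb) \<le> e * norm (x - xb)}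
      else {})"

definition normal_cone :: "'a::euclidean_space set \<Rightarrow> 'a \<Rightarrow> 'a set" where
  "normal_cone C xb =
     (if xb \<in> C then
        {v. \<exists>xs vs. (\<forall>k. xs k \<in> C \<and> vs k \<in> reg_normal_cone C (xs k)) \<and>
                    xs \<longlonglongrightarrow> xb \<and> vs \<longlonglongrightarrow> v}
      else {})"

definition locally_closed_at :: "'a::euclidean_space set \<Rightarrow> 'a \<Rightarrow> bool" where
  "locally_closed_at C xb = (\<exists>r>0. closed (C \<inter> cball xb r))"

definition prox_regular_at :: "'a::euclidean_space set \<Rightarrow> 'a \<Rightarrow> bool" where
  "prox_regular_at C xb =
     (locally_closed_at C xb \<and>
      (\<forall>vb\<in>normal_cone C xb. \<exists>e>0. \<exists>\<rho>>0.
         \<forall>x\<in>C \<inter> ball xb e. \<forall>x'\<in>C \<inter> ball xb e. \<forall>v\<in>normal_cone C x \<inter> ball vb e.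
           inner v (x' - x) \<le> \<rho> * (norm (x' - x))\<^sup>2))"

definition curve_length :: "(real \<Rightarrow> 'a::euclidean_space) \<Rightarrow> ennreal" where
  "curve_length g =
     (SUP (n, t) \<in> {(n::nat, t::nat \<Rightarrow> real). t 0 = 0 \<and> t n = 1 \<and> (\<forall>i<n. t i \<le> t (Suc i))}.
        ennreal (\<Sum>i<n. norm (g (t (Suc i)) - g (t i))))"

definition intrinsic_dist :: "'a::euclidean_space set \<Rightarrow> 'a \<Rightarrow> 'a \<Rightarrow> ennreal" where
  "intrinsic_dist C x y =
     (INF g \<in> {g. path g \<and> path_image g \<subseteq> C \<and> pathstart g = x \<and> pathfinish g = y}. curve_length g)"

definition averaging_map :: "'a::euclidean_space set \<Rightarrow> 'a \<Rightarrow> 'a \<Rightarrow> (real \<Rightarrow> 'a) \<Rightarrow> bool" where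
  "averaging_map C x x' \<gamma> =
     (continuous_on {0..1} \<gamma> \<and> \<gamma> ` {0..1} \<subseteq> C \<and> \<gamma> 0 = x \<and> \<gamma> 1 = x' \<and>
      (\<forall>t1\<in>{0..1}. \<forall>t2\<in>{0..1}.
         intrinsic_dist C (\<gamma> t1) (\<gamma> t2) = ennreal \<bar>t1 - t2\<bar> * intrinsic_dist C x x'))"

definition eps_path :: "real \<Rightarrow> 'a::euclidean_space set \<Rightarrow> 'a \<Rightarrow> 'a \<Rightarrow> (real \<Rightarrow> 'a) \<Rightarrow> bool" where
  "eps_path eps C x x' \<gamma> =
     (\<gamma> ` {0..1} \<subseteq> C \<and> \<gamma> 0 = x \<and> \<gamma> 1 = x' \<and>
      (\<exists>U g g'. open U \<and> {0..1} \<subseteq> U \<and> (\<forall>t\<in>{0..1}. g t = \<gamma> t) \<and>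
         (\<forall>t\<in>U. (g has_vector_derivative g' t) (at t)) \<and> continuous_on U g' \<and>
         (\<forall>t\<in>{0..1}. norm (g' t - (x' - x)) \<le> eps * norm (x' - x))))"

definition smoothly_approx_convex_at :: "'a::euclidean_space set \<Rightarrow> 'a \<Rightarrow> bool" where
  "smoothly_approx_convex_at C xb =
     (\<forall>eps>0. \<exists>W. open W \<and> xb \<in> W \<and>
        (\<forall>x\<in>C \<inter> W. \<forall>x'\<in>C \<inter> W. \<exists>\<gamma>. eps_path eps C x x' \<gamma>))"

end

theory Submission
  imports Defs
begin

text \<open>
  Prox-regularity makes the regular normals near \<open>xb\<close> hypomonotone:
  \<open>\<langle>v, y - x\<rangle> \<le> \<rho> \<parallel>v\<parallel> \<parallel>y - x\<parallel>\<^sup>2\<close>. Hence the nearest-point projection onto \<open>C\<close> is Lipschitz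
  near \<open>xb\<close> with constant close to \<open>1\<close> and moves the points of a short chord \<open>[a, b]\<close> by
  \<open>O(\<rho> \<parallel>b - a\<parallel>\<^sup>2)\<close>, so the projected chord is a curve in \<open>C\<close> whose Lipschitz constant exceeds
  \<open>\<parallel>b - a\<parallel>\<close> only by a cubic term. Call a \<open>\<Lambda>\<close>-Lipschitz curve arc-minimal if no arc of it can be
  replaced by a curve with smaller constant per unit parameter; averaging maps are arc-minimal
  because their speed is the intrinsic distance, and a curve of least Lipschitz constant exists
  by compactness and is arc-minimal. Comparing each arc with its projected chord gives
  \<open>\<Lambda> \<bar>t - s\<bar> \<le> \<parallel>g t - g s\<parallel> + O(\<rho>\<^sup>2 \<Lambda>\<^sup>3 \<bar>t - s\<bar>\<^sup>3)\<close>. By a stability form of the equality case of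
  the triangle inequality, the difference quotients of such a curve over nested intervals then
  differ by \<open>O(\<rho>\<^sup>2 \<Lambda>\<^sup>2)\<close> times the length of the outer interval, so the curve is \<open>C\<^sup>1\<close> with
  derivative within \<open>O(\<rho> \<parallel>x' - x\<parallel>\<^sup>2)\<close> of the chord \<open>x' - x\<close>: an \<open>\<epsilon>\<close>-path.
\<close>

section \<open>Regular normals and intrinsic distance\<close>

lemma reg_normal_cone_zero: "x \<in> C \<Longrightarrow> 0 \<in> reg_normal_cone C x"
  unfolding reg_normal_cone_def by (auto intro!: exI[of _ 1])

lemma reg_normal_cone_scaleR:
  assumes v: "v \<in> reg_normal_cone C x" and c: "c > 0"
  shows "c *\<^sub>R v \<in> reg_normal_cone C x"
proof -
  have x: "x \<in> C" using v by (simp add: reg_normal_cone_def split: if_splits)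
  have "\<exists>d>0. \<forall>y\<in>C. norm (y - x) < d \<longrightarrow> inner (c *\<^sub>R v) (y - x) \<le> e * norm (y - x)"
    if "e > 0" for e
  proof -
    obtain d where "d > 0" and d: "\<forall>y\<in>C. norm (y - x) < d \<longrightarrow> inner v (y - x) \<le> e / c * norm (y - x)"
      using v x \<open>e > 0\<close> c by (auto simp: reg_normal_cone_def dest!: spec[of _ "e / c"])
    have "inner (c *\<^sub>R v) (y - x) \<le> e * norm (y - x)" if "y \<in> C" "norm (y - x) < d" for y
      using mult_left_mono[OF d[rule_format, OF that] less_imp_le[OF c]] c by simp
    then show ?thesis using \<open>d > 0\<close> by blast
  qed
  then show ?thesis using x by (simp add: reg_normal_cone_def)
qed

lemma reg_normal_cone_subset_normal_cone: "reg_normal_cone C x \<subseteq> normal_cone C x"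
proof
  fix v assume v: "v \<in> reg_normal_cone C x"
  then have "x \<in> C" by (simp add: reg_normal_cone_def split: if_splits)
  moreover have "\<exists>xs vs. (\<forall>k. xs k \<in> C \<and> vs k \<in> reg_normal_cone C (xs k)) \<and>
      xs \<longlonglongrightarrow> x \<and> vs \<longlonglongrightarrow> v"
    by (rule exI[of _ "\<lambda>_. x"], rule exI[of _ "\<lambda>_. v"]) (use v \<open>x \<in> C\<close> in auto)
  ultimately show "v \<in> normal_cone C x" by (simp add: normal_cone_def)
qed

lemma intrinsic_dist_ge_norm: "ennreal (norm (y - x)) \<le> intrinsic_dist C x y"
  unfolding intrinsic_dist_def
proof (rule INF_greatest)
  fix g assume "g \<in> {g. path g \<and> path_image g \<subseteq> C \<and> pathstart g = x \<and> pathfinish g = y}"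
  then have "g 0 = x" "g 1 = y" by (auto simp: pathstart_def pathfinish_def)
  then show "ennreal (norm (y - x)) \<le> curve_length g"
    unfolding curve_length_def
    by (intro SUP_upper2[of "(1, \<lambda>i. if i = 0 then 0 else 1)"]) auto
qed

lemma partition_le:
  assumes "\<forall>i<n. (t::nat \<Rightarrow> real) i \<le> t (Suc i)" "i \<le> j" "j \<le> n"
  shows "t i \<le> t j"
  using assms(2,3)
proof (induction j)
  case (Suc j)
  then show ?case using assms(1) by (cases "i = Suc j") (auto intro: order_trans)
qed simp

lemma curve_length_le_lipschitz:
  assumes "M-lipschitz_on {0..1} g"
  shows "curve_length g \<le> ennreal M"
  unfolding curve_length_def
proof (rule SUP_least, clarify)
  fix n and t :: "nat \<Rightarrow> real"
  assume t0: "t 0 = 0" and tn: "t n = 1" and mono: "\<forall>i<n. t i \<le> t (Suc i)"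
  have "t i \<in> {0..1}" if "i \<le> n" for i
    using partition_le[OF mono, of 0 i] partition_le[OF mono, of i n] that t0 tn by auto
  then have "norm (g (t (Suc i)) - g (t i)) \<le> M * (t (Suc i) - t i)" if "i < n" for i
    using lipschitz_on_normD[OF assms, of "t (Suc i)" "t i"] mono that by simp
  then have "(\<Sum>i<n. norm (g (t (Suc i)) - g (t i))) \<le> (\<Sum>i<n. M * (t (Suc i) - t i))"
    by (intro sum_mono) simp
  also have "\<dots> = M" by (simp add: sum_distrib_left[symmetric] sum_lessThan_telescope t0 tn)
  finally show "ennreal (\<Sum>i<n. norm (g (t (Suc i)) - g (t i))) \<le> ennreal M"
    by (rule ennreal_leI)
qed

lemma intrinsic_dist_le_lipschitz:
  fixes q :: "real \<Rightarrow> 'a::euclidean_space"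
  assumes q: "M-lipschitz_on {0..1} q" and "q ` {0..1} \<subseteq> C" "q 0 = x" "q 1 = y"
  shows "intrinsic_dist C x y \<le> ennreal M"
proof -
  have "continuous_on {0..1} q" using q by (rule lipschitz_on_continuous_on)
  then have "intrinsic_dist C x y \<le> curve_length q"
    unfolding intrinsic_dist_def using assms(2-)
    by (intro INF_lower) (auto simp: path_def path_image_def pathstart_def pathfinish_def)
  also have "\<dots> \<le> ennreal M" using q by (rule curve_length_le_lipschitz)
  finally show ?thesis .
qed

section \<open>Concatenation of Lipschitz curves\<close>

lemma lipschitz_on_compose_affine:
  fixes f :: "real \<Rightarrow> 'a::metric_space"
  assumes f: "L-lipschitz_on S f" and "0 \<le> c" and maps: "\<And>\<tau>. \<tau> \<in> U \<Longrightarrow> c * \<tau> - d \<in> S"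
  shows "(L * c)-lipschitz_on U (\<lambda>\<tau>. f (c * \<tau> - d))"
proof -
  have "c-lipschitz_on U (\<lambda>\<tau>. c * \<tau> - d)"
    using \<open>0 \<le> c\<close> by (intro lipschitz_onI) (auto simp: dist_real_def abs_mult simp flip: right_diff_distrib)
  moreover have "L-lipschitz_on ((\<lambda>\<tau>. c * \<tau> - d) ` U) f"
    using maps by (intro lipschitz_on_subset[OF f]) auto
  ultimately show ?thesis by (rule lipschitz_on_compose2)
qed

lemma lipschitz_on_rescale:
  fixes f :: "real \<Rightarrow> 'a::metric_space"
  assumes f: "A-lipschitz_on {0..1} f" and "a \<le> b" "0 \<le> T" "A \<le> (b - a) * T"
  shows "T-lipschitz_on {a..b} (\<lambda>\<tau>. f ((\<tau> - a) / (b - a)))"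
proof (cases "a = b")
  case False
  then have "a < b" using \<open>a \<le> b\<close> by simp
  have "1 / (b - a) * \<tau> - a / (b - a) = (\<tau> - a) / (b - a)" for \<tau>
    by (simp add: diff_divide_distrib)
  moreover have "(\<tau> - a) / (b - a) \<in> {0..1}" if "\<tau> \<in> {a..b}" for \<tau>
    using that \<open>a < b\<close> by (auto simp: divide_simps)
  ultimately have "(A * (1 / (b - a)))-lipschitz_on {a..b} (\<lambda>\<tau>. f (1 / (b - a) * \<tau> - a / (b - a)))"
    using \<open>a < b\<close> by (intro lipschitz_on_compose_affine[OF f]) auto
  moreover have "A * (1 / (b - a)) \<le> T" using \<open>a < b\<close> assms(4) by (simp add: field_simps)
  ultimately show ?thesis by (auto simp: diff_divide_distrib intro: lipschitz_on_le)
qed (use \<open>0 \<le> T\<close> in simp)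

text \<open>In the degenerate cases \<open>c = 0\<close> and \<open>c = 1\<close> the junk value \<open>x / 0 = 0\<close> is harmless,
  because the corresponding curve is then constant.\<close>

definition join_at :: "real \<Rightarrow> (real \<Rightarrow> 'a) \<Rightarrow> (real \<Rightarrow> 'a) \<Rightarrow> real \<Rightarrow> 'a" where
  "join_at c f k \<tau> = (if \<tau> \<le> c then f (\<tau> / c) else k ((\<tau> - c) / (1 - c)))"

lemma lipschitz_join_at:
  fixes f k :: "real \<Rightarrow> 'a::metric_space"
  assumes f: "A-lipschitz_on {0..1} f" and k: "B-lipschitz_on {0..1} k" and meet: "f 1 = k 0"
    and c: "0 \<le> c" "c \<le> 1" and T: "A \<le> c * T" "B \<le> (1 - c) * T"
  shows "T-lipschitz_on {0..1} (join_at c f k)"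
    and "join_at c f k 0 = f 0" "join_at c f k 1 = k 1"
    and "join_at c f k ` {0..1} \<subseteq> f ` {0..1} \<union> k ` {0..1}"
proof -
  have "0 \<le> A" "0 \<le> B" using f k by (auto dest: lipschitz_on_nonneg)
  then have "0 \<le> T" using T by (simp add: algebra_simps)
  have f_const: "f 0 = f 1" if "c = 0"
    using lipschitz_onD[OF f, of 0 1] that T(1) \<open>0 \<le> A\<close> by simp
  have k_const: "k 0 = k 1" if "c = 1"
    using lipschitz_onD[OF k, of 0 1] that T(2) \<open>0 \<le> B\<close> by simp
  have "T-lipschitz_on {0..c} (\<lambda>\<tau>. f ((\<tau> - 0) / (c - 0)))"
    using c T by (intro lipschitz_on_rescale[OF f] \<open>0 \<le> T\<close>) auto
  moreover have "T-lipschitz_on {c..1} (\<lambda>\<tau>. k ((\<tau> - c) / (1 - c)))"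
    using c T by (intro lipschitz_on_rescale[OF k] \<open>0 \<le> T\<close>) auto
  moreover have "f ((c - 0) / (c - 0)) = k ((c - c) / (1 - c))"
    using meet f_const by (cases "c = 0") auto
  ultimately have "T-lipschitz_on {0..1}
      (\<lambda>\<tau>. if \<tau> \<le> c then f ((\<tau> - 0) / (c - 0)) else k ((\<tau> - c) / (1 - c)))"
    by (rule lipschitz_on_concat)
  then show "T-lipschitz_on {0..1} (join_at c f k)"
    by (simp only: join_at_def[abs_def] diff_zero)
  show "join_at c f k 0 = f 0" using c by (simp add: join_at_def)
  show "join_at c f k 1 = k 1"
    using meet k_const c by (cases "c = 1") (auto simp: join_at_def)
  have "\<tau> / c \<in> {0..1}" if "\<tau> \<in> {0..c}" for \<tau>
    using that by (cases "c = 0") (auto simp: divide_simps)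
  moreover have "(\<tau> - c) / (1 - c) \<in> {0..1}" if "\<tau> \<in> {c<..1}" for \<tau>
    using that by (auto simp: divide_simps)
  ultimately show "join_at c f k ` {0..1} \<subseteq> f ` {0..1} \<union> k ` {0..1}"
    by (auto simp: join_at_def)
qed

lemma lipschitz_join_proportional:
  fixes f k :: "real \<Rightarrow> 'a::metric_space"
  assumes f: "A-lipschitz_on {0..1} f" and k: "B-lipschitz_on {0..1} k" and meet: "f 1 = k 0"
  defines "c \<equiv> A / (A + B)"
  shows "(A + B)-lipschitz_on {0..1} (join_at c f k)"
    and "join_at c f k 0 = f 0" "join_at c f k 1 = k 1"
    and "join_at c f k ` {0..1} \<subseteq> f ` {0..1} \<union> k ` {0..1}"
proof -
  have "0 \<le> A" "0 \<le> B" using f k by (auto dest: lipschitz_on_nonneg)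
  then have "0 \<le> c" "c \<le> 1" "A \<le> c * (A + B)" "B \<le> (1 - c) * (A + B)"
    by (cases "A + B = 0"; auto simp: c_def field_simps)+
  from lipschitz_join_at[OF f k meet this]
  show "(A + B)-lipschitz_on {0..1} (join_at c f k)"
    and "join_at c f k 0 = f 0" "join_at c f k 1 = k 1"
    and "join_at c f k ` {0..1} \<subseteq> f ` {0..1} \<union> k ` {0..1}" by blast+
qed

section \<open>Almost straight curves are smooth\<close>

text \<open>A stability form of the equality case of the triangle inequality: a chord \<open>a + c\<close> almost
  as long as the bound \<open>L h\<close> forces its sub-chord \<open>a\<close> to be almost the proportional part
  \<open>(l / h) (a + c)\<close>.\<close>

lemma chord_split_estimate:
  fixes a c :: "'a::real_inner"
  assumes l: "0 \<le> l" "l \<le> h" and "0 \<le> L" "0 \<le> \<delta>"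
    and a: "norm a \<le> L * l" and c: "norm c \<le> L * (h - l)" and long: "L * h \<le> norm (a + c) + \<delta>"
  shows "(norm (h *\<^sub>R a - l *\<^sub>R (a + c)))\<^sup>2 \<le> 2 * L * \<delta> * l * (h - l) * h"
proof -
  have "h *\<^sub>R a - l *\<^sub>R (a + c) = (h - l) *\<^sub>R a - l *\<^sub>R c"
    by (simp add: algebra_simps)
  then have identity: "(norm (h *\<^sub>R a - l *\<^sub>R (a + c)))\<^sup>2
      = (h - l) * h * (norm a)\<^sup>2 + l * h * (norm c)\<^sup>2 - l * (h - l) * (norm (a + c))\<^sup>2"
    unfolding power2_norm_eq_inner by (simp add: inner_commute[of c a] algebra_simps)
  have "(h - l) * h * (norm a)\<^sup>2 \<le> (h - l) * h * (L * l)\<^sup>2"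
    using a l by (intro mult_left_mono power_mono) auto
  moreover have "l * h * (norm c)\<^sup>2 \<le> l * h * (L * (h - l))\<^sup>2"
    using c l by (intro mult_left_mono power_mono) auto
  moreover have "(L * h)\<^sup>2 \<le> (norm (a + c))\<^sup>2 + 2 * (L * h * \<delta>)"
  proof (cases "L * h \<le> \<delta>")
    case True
    then have "(L * h)\<^sup>2 \<le> L * h * \<delta>"
      using \<open>0 \<le> L\<close> l by (simp add: power2_eq_square mult_left_mono)
    moreover have "0 \<le> L * h * \<delta>" using \<open>0 \<le> L\<close> \<open>0 \<le> \<delta>\<close> l by simp
    ultimately show ?thesis by (simp add: add_increasing)
  next
    case False
    then have "(L * h - \<delta>)\<^sup>2 \<le> (norm (a + c))\<^sup>2" using long by (intro power_mono) auto
    moreover have "(L * h - \<delta>)\<^sup>2 = (L * h)\<^sup>2 - 2 * (L * h * \<delta>) + \<delta>\<^sup>2" by algebra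
    ultimately show ?thesis by (smt (verit) zero_le_power2)
  qed
  then have "l * (h - l) * (L * h)\<^sup>2 \<le> l * (h - l) * ((norm (a + c))\<^sup>2 + 2 * (L * h * \<delta>))"
    using l by (intro mult_left_mono) auto
  moreover have "(h - l) * h * (L * l)\<^sup>2 + l * h * (L * (h - l))\<^sup>2 = l * (h - l) * (L * h)\<^sup>2"
    by algebra
  moreover have "l * (h - l) * ((norm (a + c))\<^sup>2 + 2 * (L * h * \<delta>))
      = l * (h - l) * (norm (a + c))\<^sup>2 + 2 * L * \<delta> * l * (h - l) * h"
    by algebra
  ultimately show ?thesis
    unfolding identity by linarith
qed

lemma has_vector_derivative_if_quadratic_remainder:
  fixes G :: "real \<Rightarrow> 'a::real_normed_vector"
  assumes "\<And>t. norm (G t - G \<tau> - (t - \<tau>) *\<^sub>R V) \<le> Q * (t - \<tau>)\<^sup>2"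
  shows "(G has_vector_derivative V) (at \<tau>)"
  unfolding has_vector_derivative_def has_derivative_iff_norm
proof (intro conjI bounded_linear_scaleR_left)
  have lim: "((\<lambda>t. t - \<tau>) \<longlongrightarrow> 0) (at \<tau>)"
    using LIM_zero[OF tendsto_ident_at[of \<tau> UNIV]] by simp
  have bound: "norm (norm (G t - G \<tau> - (t - \<tau>) *\<^sub>R V) / norm (t - \<tau>)) \<le> norm (t - \<tau>) * Q"
    for t
  proof (cases "t = \<tau>")
    case False
    have "Q * (t - \<tau>)\<^sup>2 = (norm (t - \<tau>) * Q) * norm (t - \<tau>)"
      by (simp add: power2_eq_square mult_ac)
    then have "norm (G t - G \<tau> - (t - \<tau>) *\<^sub>R V) \<le> (norm (t - \<tau>) * Q) * norm (t - \<tau>)"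
      using assms[of t] by linarith
    then show ?thesis using False by (simp add: pos_divide_le_eq)
  qed simp
  show "((\<lambda>t. norm (G t - G \<tau> - (t - \<tau>) *\<^sub>R V) / norm (t - \<tau>)) \<longlongrightarrow> 0) (at \<tau>)"
    using lim by (rule tendsto_0_le[where K = Q]) (use bound in \<open>auto intro: always_eventually\<close>)
qed

lemma Cauchy_if_dist_le_sum:
  fixes v :: "nat \<Rightarrow> 'a::metric_space"
  assumes "e \<longlonglongrightarrow> 0" and "\<And>m n. dist (v m) (v n) \<le> e m + e n"
  shows "Cauchy v"
proof (rule metric_CauchyI)
  fix \<epsilon> :: real assume "\<epsilon> > 0"
  then obtain N where N: "\<And>n. n \<ge> N \<Longrightarrow> norm (e n - 0) < \<epsilon> / 2"
    using LIMSEQ_D[OF assms(1), of "\<epsilon> / 2"] by auto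
  have "dist (v m) (v n) < \<epsilon>" if "m \<ge> N" "n \<ge> N" for m n
    using assms(2)[of m n] N[OF that(1)] N[OF that(2)] by simp
  then show "\<exists>N. \<forall>m\<ge>N. \<forall>n\<ge>N. dist (v m) (v n) < \<epsilon>" by blast
qed

lemma clamp_01: "clamp 0 1 (t::real) = max 0 (min 1 t)"
  unfolding clamp_def Basis_real_def by auto

locale almost_straight =
  fixes g :: "real \<Rightarrow> 'a::euclidean_space" and L b :: real
  assumes lipschitz: "L-lipschitz_on {0..1} g" and b_nonneg: "0 \<le> b"
    and reverse: "\<And>s t. s \<in> {0..1} \<Longrightarrow> t \<in> {0..1} \<Longrightarrow>
      L * \<bar>t - s\<bar> \<le> norm (g t - g s) + b\<^sup>2 * L^3 * \<bar>t - s\<bar>^3"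
begin

lemma L_nonneg: "0 \<le> L"
  using lipschitz by (rule lipschitz_on_nonneg)

lemma lipschitz_norm: "s \<in> {0..1} \<Longrightarrow> t \<in> {0..1} \<Longrightarrow> norm (g t - g s) \<le> L * \<bar>t - s\<bar>"
  using lipschitz_on_normD[OF lipschitz, of t s] by simp

definition slope :: "real \<Rightarrow> real \<Rightarrow> 'a" where
  "slope s t = (1 / (t - s)) *\<^sub>R (g t - g s)"

lemma slope_sym: "slope s t = slope t s"
proof -
  have "1 / (s - t) = - (1 / (t - s))" by (simp add: divide_simps)
  then show ?thesis by (simp add: slope_def flip: scaleR_minus_right)
qed

lemma slope_nested_third:
  assumes st: "0 \<le> s" "s \<le> s'" "s' < t'" "t' \<le> t" "t \<le> 1" and third: "t - s \<le> 3 * (t' - s')"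
  shows "norm (slope s' t' - slope s t) \<le> 2 * b * L\<^sup>2 * (t - s)"
proof -
  define h l a c where "h = t - s" and "l = t' - s'"
    and "a = g t' - g s'" and "c = (g t - g s) - (g t' - g s')"
  have l: "0 < l" "l \<le> h" using st by (auto simp: h_def l_def)
  have a: "norm a \<le> L * l"
    using lipschitz_norm[of s' t'] st by (simp add: a_def l_def)
  have "norm c \<le> norm (g s' - g s) + norm (g t - g t')"
    using norm_triangle_ineq[of "g s' - g s" "g t - g t'"] by (simp add: c_def algebra_simps)
  also have "\<dots> \<le> L * (s' - s) + L * (t - t')"
    using lipschitz_norm[of s s'] lipschitz_norm[of t' t] st by (intro add_mono) auto
  finally have c: "norm c \<le> L * (h - l)" by (simp add: h_def l_def algebra_simps)
  have ac: "a + c = g t - g s" by (simp add: a_def c_def)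
  have long: "L * h \<le> norm (a + c) + b\<^sup>2 * L^3 * h^3"
    using reverse[of s t] st by (simp add: ac h_def)
  have bound_nonneg: "0 \<le> 2 * b * L\<^sup>2 * h\<^sup>2 * l" using b_nonneg l by simp
  have "0 \<le> b\<^sup>2 * L^3 * h^3" using l L_nonneg by simp
  from chord_split_estimate[OF less_imp_le[OF l(1)] l(2) L_nonneg this a c long]
  have "(norm (h *\<^sub>R a - l *\<^sub>R (a + c)))\<^sup>2 \<le> 2 * L * (b\<^sup>2 * L^3 * h^3) * l * (h - l) * h" .
  also have "\<dots> = (2 * b\<^sup>2 * L^4 * h^4 * l) * (h - l)"
    by (simp add: power_numeral_reduce)
  also have "\<dots> \<le> (2 * b\<^sup>2 * L^4 * h^4 * l) * (2 * l)"
    using third l L_nonneg by (intro mult_left_mono) (simp_all add: h_def l_def)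
  also have "\<dots> = (2 * b * L\<^sup>2 * h\<^sup>2 * l)\<^sup>2"
    by algebra
  finally have bound: "norm (h *\<^sub>R a - l *\<^sub>R (a + c)) \<le> 2 * b * L\<^sup>2 * h\<^sup>2 * l"
    using bound_nonneg by (rule power2_le_imp_le)
  have "slope s' t' = (1 / l) *\<^sub>R a" "slope s t = (1 / h) *\<^sub>R (a + c)"
    by (simp_all add: slope_def a_def l_def ac[symmetric] h_def)
  moreover have "(1 / (h * l)) * h = 1 / l" "(1 / (h * l)) * l = 1 / h" using l by simp_all
  ultimately have "slope s' t' - slope s t = (1 / (h * l)) *\<^sub>R (h *\<^sub>R a - l *\<^sub>R (a + c))"
    by (simp only: scaleR_diff_right scaleR_scaleR)
  then have "norm (slope s' t' - slope s t) = norm (h *\<^sub>R a - l *\<^sub>R (a + c)) / (h * l)"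
    using l by simp
  also have "\<dots> \<le> 2 * b * L\<^sup>2 * h\<^sup>2 * l / (h * l)"
    using bound l by (intro divide_right_mono) auto
  also have "\<dots> = 2 * b * L\<^sup>2 * (t - s)" using l by (simp add: h_def power2_eq_square)
  finally show ?thesis .
qed

text \<open>Shrinking the outer interval by at most a third at a time, each step costs
  \<open>2 b L\<^sup>2\<close> times a geometrically decreasing length.\<close>

lemma slope_nested_pow:
  assumes "0 \<le> s" "s \<le> s'" "s' < t'" "t' \<le> t" "t \<le> 1" "(2/3)^n * (t - s) \<le> t' - s'"
  shows "norm (slope s' t' - slope s t) \<le> 6 * b * L\<^sup>2 * (t - s)"
  using assms
proof (induction n arbitrary: s t)
  have third: "norm (slope s' t' - slope s t) \<le> 6 * b * L\<^sup>2 * (t - s)"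
    if "0 \<le> s" "s \<le> s'" "s' < t'" "t' \<le> t" "t \<le> 1" "t - s \<le> 3 * (t' - s')" for s t
  proof -
    have "0 \<le> b * L\<^sup>2 * (t - s)" using that b_nonneg by simp
    then show ?thesis using slope_nested_third[OF that] by linarith
  qed
  {
    case 0
    then show ?case by (intro third) auto
  next
    case (Suc n)
    show ?case
    proof (cases "t - s \<le> 3 * (t' - s')")
      case True
      then show ?thesis using Suc.prems by (intro third) auto
    next
      case False
      define m where "m = min s' (t - 2 * (t - s) / 3)"
      define M where "M = m + 2 * (t - s) / 3"
      have m: "s \<le> m" "m \<le> s'" "t' \<le> M" "M \<le> t" "M - m = 2 * (t - s) / 3"
        using Suc.prems False by (auto simp: m_def M_def min_def field_simps)
      have "(2/3)^n * (M - m) = (2/3)^Suc n * (t - s)" using m(5) by simp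
      with Suc.prems(6) have shrink: "(2/3)^n * (M - m) \<le> t' - s'" by (simp only:)
      have "norm (slope s' t' - slope m M) \<le> 6 * b * L\<^sup>2 * (M - m)"
        by (rule Suc.IH[OF _ m(2) _ m(3) _ shrink]) (use Suc.prems m in linarith)+
      moreover have "norm (slope m M - slope s t) \<le> 2 * b * L\<^sup>2 * (t - s)"
        using Suc.prems m by (intro slope_nested_third) auto
      ultimately show ?thesis
        using norm_triangle_ineq[of "slope s' t' - slope m M" "slope m M - slope s t"] m(5)
        by (simp add: algebra_simps)
    qed
  }
qed

lemma slope_nested:
  assumes "0 \<le> s" "s \<le> s'" "s' < t'" "t' \<le> t" "t \<le> 1"
  shows "norm (slope s' t' - slope s t) \<le> 6 * b * L\<^sup>2 * (t - s)"
proof -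
  obtain n where "(2/3::real)^n < (t' - s') / (t - s)"
    using real_arch_pow_inv[of "(t' - s') / (t - s)" "2/3"] assms by auto
  then have "(2/3)^n * (t - s) \<le> t' - s'" using assms by (simp add: less_divide_eq)
  with assms show ?thesis by (rule slope_nested_pow)
qed

lemma slope_overlap:
  assumes "0 \<le> s1" "s1 \<le> \<tau>" "\<tau> \<le> t1" "s1 < t1" "t1 \<le> 1"
    and "0 \<le> s2" "s2 \<le> \<tau>" "\<tau> \<le> t2" "s2 < t2" "t2 \<le> 1"
  shows "norm (slope s1 t1 - slope s2 t2) \<le> 12 * b * L\<^sup>2 * ((t1 - s1) + (t2 - s2))"
proof -
  define m M where "m = min s1 s2" and "M = max t1 t2"
  have "norm (slope s1 t1 - slope s2 t2) \<le> norm (slope s1 t1 - slope m M) + norm (slope s2 t2 - slope m M)"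
    using norm_triangle_ineq4[of "slope s1 t1 - slope m M" "slope s2 t2 - slope m M"] by simp
  also have "\<dots> \<le> 6 * b * L\<^sup>2 * (M - m) + 6 * b * L\<^sup>2 * (M - m)"
    using assms by (intro add_mono slope_nested) (auto simp: m_def M_def)
  also have "\<dots> \<le> 12 * b * L\<^sup>2 * ((t1 - s1) + (t2 - s2))"
    using assms b_nonneg by (auto simp: m_def M_def intro!: mult_left_mono)
  finally show ?thesis .
qed

definition left_end :: "real \<Rightarrow> nat \<Rightarrow> real" where
  "left_end \<tau> n = min \<tau> (1 - 1 / real (Suc n))"

definition tangent :: "real \<Rightarrow> 'a" where
  "tangent \<tau> = lim (\<lambda>n. slope (left_end \<tau> n) (left_end \<tau> n + 1 / real (Suc n)))"

lemma left_end_bounds: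
  assumes "\<tau> \<in> {0..1}"
  shows "0 \<le> left_end \<tau> n" "left_end \<tau> n \<le> \<tau>" "\<tau> \<le> left_end \<tau> n + 1 / real (Suc n)"
    "left_end \<tau> n < left_end \<tau> n + 1 / real (Suc n)" "left_end \<tau> n + 1 / real (Suc n) \<le> 1"
proof -
  have "0 < 1 / real (Suc n)" "1 / real (Suc n) \<le> 1" by (auto simp: divide_simps)
  then show "0 \<le> left_end \<tau> n" "left_end \<tau> n \<le> \<tau>" "\<tau> \<le> left_end \<tau> n + 1 / real (Suc n)"
    "left_end \<tau> n < left_end \<tau> n + 1 / real (Suc n)" "left_end \<tau> n + 1 / real (Suc n) \<le> 1"
    using assms by (auto simp: left_end_def min_def)
qed

lemma slope_close_left_end:
  assumes "0 \<le> s" "s \<le> \<tau>" "\<tau> \<le> t" "s < t" "t \<le> 1"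
  shows "norm (slope s t - slope (left_end \<tau> n) (left_end \<tau> n + 1 / real (Suc n)))
    \<le> 12 * b * L\<^sup>2 * (t - s) + 12 * b * L\<^sup>2 / real (Suc n)"
  using slope_overlap[OF assms left_end_bounds[of \<tau> n]] assms by (simp add: algebra_simps)

lemma slope_tendsto_tangent:
  assumes "\<tau> \<in> {0..1}"
  shows "(\<lambda>n. slope (left_end \<tau> n) (left_end \<tau> n + 1 / real (Suc n))) \<longlonglongrightarrow> tangent \<tau>"
proof -
  have "(\<lambda>n. 12 * b * L\<^sup>2 / real (Suc n)) \<longlonglongrightarrow> 0"
    by (intro LIMSEQ_Suc[OF lim_const_over_n])
  moreover have "dist (slope (left_end \<tau> m) (left_end \<tau> m + 1 / real (Suc m)))
      (slope (left_end \<tau> n) (left_end \<tau> n + 1 / real (Suc n)))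
      \<le> 12 * b * L\<^sup>2 / real (Suc m) + 12 * b * L\<^sup>2 / real (Suc n)" for m n
    using slope_close_left_end[OF left_end_bounds[OF assms, of m]] by (simp add: dist_norm)
  ultimately have "Cauchy (\<lambda>n. slope (left_end \<tau> n) (left_end \<tau> n + 1 / real (Suc n)))"
    by (rule Cauchy_if_dist_le_sum)
  then show ?thesis
    by (simp add: tangent_def Cauchy_convergent_iff convergent_LIMSEQ_iff)
qed

lemma slope_close_tangent:
  assumes "0 \<le> s" "s \<le> \<tau>" "\<tau> \<le> t" "s < t" "t \<le> 1"
  shows "norm (slope s t - tangent \<tau>) \<le> 12 * b * L\<^sup>2 * (t - s)"
proof (rule tendsto_le[OF trivial_limit_sequentially])
  show "(\<lambda>n. norm (slope s t - slope (left_end \<tau> n) (left_end \<tau> n + 1 / real (Suc n))))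
      \<longlonglongrightarrow> norm (slope s t - tangent \<tau>)"
    using slope_tendsto_tangent assms by (intro tendsto_intros) auto
  show "(\<lambda>n. 12 * b * L\<^sup>2 * (t - s) + 12 * b * L\<^sup>2 / real (Suc n)) \<longlonglongrightarrow> 12 * b * L\<^sup>2 * (t - s)"
    using tendsto_add[OF tendsto_const LIMSEQ_Suc[OF lim_const_over_n]] by simp
qed (use slope_close_left_end[OF assms] in \<open>auto intro: always_eventually\<close>)

lemma tangent_taylor:
  assumes "\<tau> \<in> {0..1}" "t \<in> {0..1}"
  shows "norm (g t - g \<tau> - (t - \<tau>) *\<^sub>R tangent \<tau>) \<le> 12 * b * L\<^sup>2 * (t - \<tau>)\<^sup>2"
proof (cases "t = \<tau>")
  case False
  have "g t - g \<tau> = (t - \<tau>) *\<^sub>R slope \<tau> t" using False by (simp add: slope_def)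
  then have "norm (g t - g \<tau> - (t - \<tau>) *\<^sub>R tangent \<tau>) = \<bar>t - \<tau>\<bar> * norm (slope \<tau> t - tangent \<tau>)"
    by (simp flip: scaleR_diff_right)
  also have "norm (slope \<tau> t - tangent \<tau>) \<le> 12 * b * L\<^sup>2 * \<bar>t - \<tau>\<bar>"
  proof (cases "\<tau> < t")
    case True
    then show ?thesis using assms slope_close_tangent[of \<tau> \<tau> t] by simp
  next
    case False
    then show ?thesis using assms \<open>t \<noteq> \<tau>\<close> slope_close_tangent[of t \<tau> \<tau>] by (simp add: slope_sym)
  qed
  then have "\<bar>t - \<tau>\<bar> * norm (slope \<tau> t - tangent \<tau>) \<le> \<bar>t - \<tau>\<bar> * (12 * b * L\<^sup>2 * \<bar>t - \<tau>\<bar>)"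
    by (intro mult_left_mono) auto
  also have "\<dots> = 12 * b * L\<^sup>2 * \<bar>t - \<tau>\<bar>\<^sup>2" by (simp only: power2_eq_square mult_ac)
  finally show ?thesis by (simp only: power2_abs)
qed simp

lemma tangent_lipschitz: "(24 * b * L\<^sup>2)-lipschitz_on {0..1} tangent"
proof (rule lipschitz_onI)
  fix \<tau> \<sigma> :: real assume "\<tau> \<in> {0..1}" "\<sigma> \<in> {0..1}"
  show "dist (tangent \<tau>) (tangent \<sigma>) \<le> 24 * b * L\<^sup>2 * dist \<tau> \<sigma>"
  proof (cases "\<tau> = \<sigma>")
    case False
    define s t where "s = min \<tau> \<sigma>" and "t = max \<tau> \<sigma>"
    have "dist (tangent \<tau>) (tangent \<sigma>) \<le> norm (slope s t - tangent \<tau>) + norm (slope s t - tangent \<sigma>)"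
      using norm_triangle_ineq4[of "slope s t - tangent \<sigma>" "slope s t - tangent \<tau>"]
      by (simp add: dist_norm norm_minus_commute)
    also have "\<dots> \<le> 12 * b * L\<^sup>2 * (t - s) + 12 * b * L\<^sup>2 * (t - s)"
      using \<open>\<tau> \<in> {0..1}\<close> \<open>\<sigma> \<in> {0..1}\<close> False
      by (intro add_mono slope_close_tangent) (auto simp: s_def t_def)
    also have "\<dots> = 24 * b * L\<^sup>2 * dist \<tau> \<sigma>"
      by (simp add: s_def t_def dist_real_def min_def max_def)
    finally show ?thesis .
  qed simp
qed (use b_nonneg in simp)

lemma tangent_near_chord: "\<tau> \<in> {0..1} \<Longrightarrow> norm (tangent \<tau> - (g 1 - g 0)) \<le> 12 * b * L\<^sup>2"
  using slope_close_tangent[of 0 \<tau> 1] by (simp add: slope_def norm_minus_commute)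

definition extension :: "real \<Rightarrow> 'a" where
  "extension t = g (clamp 0 1 t) + (t - clamp 0 1 t) *\<^sub>R tangent (clamp 0 1 t)"

lemma extension_taylor:
  "norm (extension t - extension \<tau> - (t - \<tau>) *\<^sub>R tangent (clamp 0 1 \<tau>)) \<le> 36 * b * L\<^sup>2 * (t - \<tau>)\<^sup>2"
proof -
  define s \<sigma> where "s = clamp 0 1 t" and "\<sigma> = clamp 0 1 \<tau>"
  have in01: "s \<in> {0..1}" "\<sigma> \<in> {0..1}" by (simp_all add: s_def \<sigma>_def clamp_01)
  have close: "\<bar>s - \<sigma>\<bar> \<le> \<bar>t - \<tau>\<bar>" by (auto simp: s_def \<sigma>_def clamp_01)
  have "norm (g s - g \<sigma> - (s - \<sigma>) *\<^sub>R tangent \<sigma>) \<le> 12 * b * L\<^sup>2 * (s - \<sigma>)\<^sup>2"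
    using tangent_taylor[OF in01(2,1)] .
  also have "\<dots> \<le> 12 * b * L\<^sup>2 * (t - \<tau>)\<^sup>2"
    using close b_nonneg by (intro mult_left_mono) (auto simp: abs_le_square_iff)
  finally have taylor: "norm (g s - g \<sigma> - (s - \<sigma>) *\<^sub>R tangent \<sigma>) \<le> 12 * b * L\<^sup>2 * (t - \<tau>)\<^sup>2" .
  have tangent: "norm ((t - s) *\<^sub>R (tangent s - tangent \<sigma>)) \<le> 24 * b * L\<^sup>2 * (t - \<tau>)\<^sup>2"
  proof (cases "s = \<sigma>")
    case False
    then have "\<bar>t - s\<bar> \<le> \<bar>t - \<tau>\<bar>" by (auto simp: s_def \<sigma>_def clamp_01)
    moreover have "norm (tangent s - tangent \<sigma>) \<le> 24 * b * L\<^sup>2 * \<bar>s - \<sigma>\<bar>"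
      using lipschitz_on_normD[OF tangent_lipschitz in01] by simp
    moreover have "24 * b * L\<^sup>2 * \<bar>s - \<sigma>\<bar> \<le> 24 * b * L\<^sup>2 * \<bar>t - \<tau>\<bar>"
      using close b_nonneg by (intro mult_left_mono) auto
    ultimately have "\<bar>t - s\<bar> * norm (tangent s - tangent \<sigma>) \<le> \<bar>t - \<tau>\<bar> * (24 * b * L\<^sup>2 * \<bar>t - \<tau>\<bar>)"
      by (intro mult_mono) auto
    also have "\<dots> = 24 * b * L\<^sup>2 * \<bar>t - \<tau>\<bar>\<^sup>2" by (simp only: power2_eq_square mult_ac)
    finally show ?thesis by (simp only: norm_scaleR real_norm_def power2_abs)
  qed (use b_nonneg in simp)
  have "extension t - extension \<tau> - (t - \<tau>) *\<^sub>R tangent \<sigma>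
      = (g s - g \<sigma> - (s - \<sigma>) *\<^sub>R tangent \<sigma>) + (t - s) *\<^sub>R (tangent s - tangent \<sigma>)"
    by (simp add: extension_def s_def \<sigma>_def algebra_simps)
  then have "norm (extension t - extension \<tau> - (t - \<tau>) *\<^sub>R tangent \<sigma>)
      \<le> norm (g s - g \<sigma> - (s - \<sigma>) *\<^sub>R tangent \<sigma>) + norm ((t - s) *\<^sub>R (tangent s - tangent \<sigma>))"
    by (metis norm_triangle_ineq)
  then show ?thesis using taylor tangent by (simp add: \<sigma>_def)
qed

lemma C1_extension:
  obtains G G' where "\<forall>t\<in>{0..1}. G t = g t" "\<forall>t. (G has_vector_derivative G' t) (at t)"
    "continuous_on UNIV G'" "\<forall>t\<in>{0..1}. norm (G' t - (g 1 - g 0)) \<le> 12 * b * L\<^sup>2"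
proof
  show "\<forall>t\<in>{0..1}. extension t = g t" by (simp add: extension_def clamp_01)
  show "\<forall>t. (extension has_vector_derivative tangent (clamp 0 1 t)) (at t)"
    using extension_taylor by (blast intro: has_vector_derivative_if_quadratic_remainder)
  have "continuous_on (cbox 0 1) tangent"
    using lipschitz_on_continuous_on[OF tangent_lipschitz] by simp
  then show "continuous_on UNIV (\<lambda>t. tangent (clamp 0 1 t))" by (rule clamp_continuous_on)
  show "\<forall>t\<in>{0..1}. norm (tangent (clamp 0 1 t) - (g 1 - g 0)) \<le> 12 * b * L\<^sup>2"
    using tangent_near_chord by (simp add: clamp_01)
qed

lemma eps_path:
  assumes L: "L \<le> 2 * norm (g 1 - g 0)" and eps: "48 * b * norm (g 1 - g 0) \<le> eps"
    and "g ` {0..1} \<subseteq> C"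
  shows "eps_path eps C (g 0) (g 1) g"
proof -
  obtain G G' where G: "\<forall>t\<in>{0..1}. G t = g t" "\<forall>t. (G has_vector_derivative G' t) (at t)"
    "continuous_on UNIV G'" "\<forall>t\<in>{0..1}. norm (G' t - (g 1 - g 0)) \<le> 12 * b * L\<^sup>2"
    using C1_extension by blast
  have "12 * b * L\<^sup>2 \<le> 12 * b * (2 * norm (g 1 - g 0))\<^sup>2"
    using L L_nonneg b_nonneg by (intro mult_left_mono power_mono) auto
  also have "\<dots> = (48 * b * norm (g 1 - g 0)) * norm (g 1 - g 0)"
    by (simp add: power2_eq_square)
  also have "\<dots> \<le> eps * norm (g 1 - g 0)"
    using eps by (intro mult_right_mono) auto
  finally have "\<forall>t\<in>{0..1}. norm (G' t - (g 1 - g 0)) \<le> eps * norm (g 1 - g 0)"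
    using G(4) by (auto intro: order_trans)
  then show ?thesis
    unfolding eps_path_def using G(1-3) assms(3) by (intro conjI exI[of _ UNIV]) auto
qed

end

section \<open>Nearest-point projection onto a hypomonotone set\<close>

text \<open>The Lipschitz estimate for nearest-point projections: \<open>p\<close> and \<open>p'\<close> will be the
  projections of \<open>u\<close> and \<open>u'\<close>.\<close>

lemma dist_le_of_hypomonotone_normals:
  fixes u u' p p' :: "'a::real_inner"
  assumes hyp: "inner (u - p) (p' - p) \<le> \<rho> * norm (u - p) * (norm (p' - p))\<^sup>2"
      "inner (u' - p') (p - p') \<le> \<rho> * norm (u' - p') * (norm (p - p'))\<^sup>2"
    and \<eta>: "norm (u - p) \<le> \<eta>" "norm (u' - p') \<le> \<eta>" and "\<rho> \<ge> 0" and small: "2 * \<rho> * \<eta> < 1"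
  shows "norm (p - p') \<le> norm (u - u') / (1 - 2 * \<rho> * \<eta>)"
proof -
  define N where "N = (norm (p' - p))\<^sup>2"
  have "inner (u - p) (p' - p) \<le> \<rho> * \<eta> * N"
    using hyp(1) mult_right_mono[OF mult_left_mono[OF \<eta>(1) \<open>\<rho> \<ge> 0\<close>], of N]
    by (simp add: N_def)
  moreover have "inner (u' - p') (p - p') \<le> \<rho> * \<eta> * N"
    using hyp(2) mult_right_mono[OF mult_left_mono[OF \<eta>(2) \<open>\<rho> \<ge> 0\<close>], of N]
    by (simp add: N_def norm_minus_commute)
  moreover have "inner (u - p) (p' - p) + inner (u' - p') (p - p') = N - inner (u' - u) (p' - p)"
    unfolding N_def power2_norm_eq_inner by (simp add: algebra_simps)
  moreover have "inner (u' - u) (p' - p) \<le> norm (u - u') * norm (p' - p)"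
    using norm_cauchy_schwarz[of "u' - u" "p' - p"] by (simp add: norm_minus_commute)
  ultimately have "N \<le> \<rho> * \<eta> * N + \<rho> * \<eta> * N + norm (u - u') * norm (p' - p)"
    by linarith
  then have "(1 - 2 * \<rho> * \<eta>) * N \<le> norm (u - u') * norm (p' - p)"
    by (simp add: algebra_simps)
  then have "(1 - 2 * \<rho> * \<eta>) * norm (p' - p) \<le> norm (u - u')"
    by (cases "p' = p") (auto simp: N_def power2_eq_square mult_le_cancel_right mult.assoc)
  then show ?thesis
    using small by (simp add: pos_le_divide_eq mult.commute norm_minus_commute)
qed

locale hypomonotone_near =
  fixes C :: "'a::euclidean_space set" and xb :: 'a and R \<rho> :: real
  assumes R_pos: "R > 0" and \<rho>_pos: "\<rho> > 0" and xb_in_C: "xb \<in> C"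
    and closed_near: "closed (C \<inter> cball xb R)"
    and hypomonotone: "\<And>x y v. x \<in> C \<inter> ball xb R \<Longrightarrow> y \<in> C \<inter> ball xb R \<Longrightarrow>
      v \<in> reg_normal_cone C x \<Longrightarrow> inner v (y - x) \<le> \<rho> * norm v * (norm (y - x))\<^sup>2"

text \<open>Prox-regularity at the normal \<open>0\<close> controls all small limiting normals near \<open>xb\<close>;
  rescaling a regular normal into that range produces the factor \<open>norm v\<close>.\<close>

lemma prox_regular_at_imp_hypomonotone_near:
  fixes C :: "'a::euclidean_space set"
  assumes "xb \<in> C" "prox_regular_at C xb"
  obtains R \<rho> where "hypomonotone_near C xb R \<rho>"
proof -
  obtain r where "r > 0" and r: "closed (C \<inter> cball xb r)"
    using assms(2) unfolding prox_regular_at_def locally_closed_at_def by auto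
  have "0 \<in> normal_cone C xb"
    using reg_normal_cone_zero[OF assms(1)] reg_normal_cone_subset_normal_cone by blast
  with assms(2) obtain e \<rho> where "e > 0" "\<rho> > 0" and small_normals:
    "\<And>x y v. x \<in> C \<inter> ball xb e \<Longrightarrow> y \<in> C \<inter> ball xb e \<Longrightarrow> v \<in> normal_cone C x \<inter> ball 0 e \<Longrightarrow>
       inner v (y - x) \<le> \<rho> * (norm (y - x))\<^sup>2"
    unfolding prox_regular_at_def by blast
  define R where "R = min e r"
  have "inner v (y - x) \<le> 2 * \<rho> / e * norm v * (norm (y - x))\<^sup>2"
    if x: "x \<in> C \<inter> ball xb R" and y: "y \<in> C \<inter> ball xb R" and v: "v \<in> reg_normal_cone C x"
    for x y v
  proof (cases "v = 0")
    case False
    define c where "c = e / (2 * norm v)"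
    have "c > 0" using False \<open>e > 0\<close> by (simp add: c_def)
    have "c *\<^sub>R v \<in> normal_cone C x \<inter> ball 0 e"
      using reg_normal_cone_subset_normal_cone reg_normal_cone_scaleR[OF v \<open>c > 0\<close>] False \<open>e > 0\<close>
      by (auto simp: c_def)
    moreover have "x \<in> C \<inter> ball xb e" "y \<in> C \<inter> ball xb e" using x y by (auto simp: R_def)
    ultimately have "c * inner v (y - x) \<le> \<rho> * (norm (y - x))\<^sup>2"
      using small_normals by fastforce
    then show ?thesis
      using \<open>c > 0\<close> False \<open>e > 0\<close> by (simp add: c_def field_simps)
  qed simp
  moreover have "C \<inter> cball xb R = (C \<inter> cball xb r) \<inter> cball xb R"
    by (auto simp: R_def)
  then have "closed (C \<inter> cball xb R)"
    using closed_Int[OF r closed_cball] by metis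
  ultimately have "hypomonotone_near C xb R (2 * \<rho> / e)"
    using \<open>e > 0\<close> \<open>r > 0\<close> \<open>\<rho> > 0\<close> assms(1) by unfold_locales (auto simp: R_def)
  then show ?thesis by (rule that)
qed

context hypomonotone_near
begin

definition K :: "'a set" where "K = C \<inter> cball xb R"

lemma K_subset_C: "K \<subseteq> C"
  by (auto simp: K_def)

lemma xb_in_K: "xb \<in> K"
  using xb_in_C R_pos by (simp add: K_def)

lemma compact_K: "compact K"
  using closed_near by (simp add: K_def compact_eq_bounded_closed bounded_Int)

lemma ball_subset_K: "C \<inter> ball xb R \<subseteq> K"
  by (auto simp: K_def)

definition proj :: "'a \<Rightarrow> 'a" where
  "proj u = (SOME p. p \<in> K \<and> (\<forall>y\<in>K. norm (u - p) \<le> norm (u - y)))"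

lemma proj_in_K: "proj u \<in> K" and proj_nearest: "y \<in> K \<Longrightarrow> norm (u - proj u) \<le> norm (u - y)"
proof -
  obtain p where "p \<in> K" "\<And>y. y \<in> K \<Longrightarrow> dist u p \<le> dist u y"
    using distance_attains_inf[of K u] compact_K xb_in_K compact_imp_closed by blast
  then have "\<exists>p. p \<in> K \<and> (\<forall>y\<in>K. norm (u - p) \<le> norm (u - y))" by (auto simp: dist_norm)
  from someI_ex[OF this] show "proj u \<in> K" "y \<in> K \<Longrightarrow> norm (u - proj u) \<le> norm (u - y)"
    unfolding proj_def by auto
qed

lemma proj_eq_self: "a \<in> K \<Longrightarrow> proj a = a"
  using proj_nearest[of a a] by simp

lemma proj_near:
  assumes "u \<in> ball xb (R/2)"
  shows "norm (u - proj u) < R/2" "proj u \<in> C \<inter> ball xb R"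
proof -
  show *: "norm (u - proj u) < R/2"
    using proj_nearest[OF xb_in_K, of u] assms by (simp add: dist_norm norm_minus_commute)
  have "dist xb (proj u) \<le> dist xb u + norm (u - proj u)"
    using dist_triangle[of xb "proj u" u] by (simp add: dist_norm)
  then show "proj u \<in> C \<inter> ball xb R"
    using * assms proj_in_K by (simp add: K_def)
qed

lemma proj_normal:
  assumes u: "u \<in> ball xb (R/2)"
  shows "u - proj u \<in> reg_normal_cone C (proj u)"
proof -
  define p where "p = proj u"
  have p: "p \<in> C \<inter> ball xb R" using proj_near(2)[OF u] by (simp add: p_def)
  have "\<exists>d>0. \<forall>y\<in>C. norm (y - p) < d \<longrightarrow> inner (u - p) (y - p) \<le> e * norm (y - p)"
    if "e > 0" for e
  proof (intro exI[of _ "min (2 * e) (R - dist xb p)"] conjI ballI impI)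
    show "0 < min (2 * e) (R - dist xb p)" using that p by simp
    fix y assume "y \<in> C" and y: "norm (y - p) < min (2 * e) (R - dist xb p)"
    then have "y \<in> K"
      using dist_triangle[of xb y p] by (simp add: K_def dist_norm norm_minus_commute)
    then have "(norm (u - p))\<^sup>2 \<le> (norm (u - y))\<^sup>2"
      using proj_nearest[of y u] by (simp add: p_def power_mono)
    moreover have "2 * inner (u - p) (y - p) = (norm (u - p))\<^sup>2 + (norm (y - p))\<^sup>2 - (norm (u - y))\<^sup>2"
      using dot_norm_neg[of "u - p" "y - p"] by simp
    ultimately have "2 * inner (u - p) (y - p) \<le> norm (y - p) * norm (y - p)"
      by (simp add: power2_eq_square)
    also have "\<dots> \<le> 2 * e * norm (y - p)"
      using y by (intro mult_right_mono) auto
    finally show "inner (u - p) (y - p) \<le> e * norm (y - p)" by simp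
  qed
  then show ?thesis using p by (simp add: reg_normal_cone_def p_def)
qed

lemma proj_lipschitz:
  assumes "u \<in> ball xb (R/2)" "u' \<in> ball xb (R/2)"
    and "norm (u - proj u) \<le> \<eta>" "norm (u' - proj u') \<le> \<eta>" "2 * \<rho> * \<eta> < 1"
  shows "norm (proj u - proj u') \<le> norm (u - u') / (1 - 2 * \<rho> * \<eta>)"
  using assms \<rho>_pos proj_near(2)[OF assms(1)] proj_near(2)[OF assms(2)]
  by (intro dist_le_of_hypomonotone_normals hypomonotone proj_normal) auto

text \<open>The normal \<open>z - proj z\<close> makes an almost obtuse angle with both \<open>a - proj z\<close> and
  \<open>b - proj z\<close>, whose convex combination is \<open>z - proj z\<close> itself.\<close>

lemma chord_proj_dist:
  assumes a: "a \<in> C \<inter> ball xb (R/2)" and b: "b \<in> C \<inter> ball xb (R/2)" and \<tau>: "\<tau> \<in> {0..1}"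
  defines "z \<equiv> a + \<tau> *\<^sub>R (b - a)"
  shows "norm (z - proj z) \<le> 4 * \<rho> * (norm (b - a))\<^sup>2"
proof -
  define p w n where "p = proj z" and "w = z - p" and "n = norm (b - a)"
  have z: "z \<in> ball xb (R/2)"
    using convexD_alt[OF convex_ball, of a xb "R/2" b \<tau>] a b \<tau> by (simp add: z_def algebra_simps)
  have p: "p \<in> C \<inter> ball xb R" and w: "w \<in> reg_normal_cone C p"
    using proj_near(2)[OF z] proj_normal[OF z] by (simp_all add: p_def w_def)
  have "z - a = \<tau> *\<^sub>R (b - a)" "z - b = (1 - \<tau>) *\<^sub>R (a - b)"
    by (simp_all add: z_def algebra_simps)
  then have "norm (z - a) = \<tau> * n" "norm (z - b) = (1 - \<tau>) * n"
    using \<tau> by (simp_all add: n_def norm_minus_commute)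
  then have chord_part: "norm (z - c) \<le> n" if "c \<in> {a, b}" for c
    using that \<tau> mult_left_le_one_le[of n \<tau>] mult_left_le_one_le[of n "1 - \<tau>"]
    by (auto simp: n_def)
  have end_dist: "norm (c - p) \<le> 2 * n" if "c \<in> {a, b}" for c
  proof -
    have "c \<in> K" using that a b ball_subset_K R_pos by auto
    then have "norm w \<le> norm (z - c)" using proj_nearest by (simp add: w_def p_def)
    moreover have "norm (z - c) \<le> n" using chord_part[OF that] .
    moreover have "norm (c - p) \<le> norm (z - c) + norm w"
      using norm_triangle_ineq4[of w "z - c"] by (simp add: w_def norm_minus_commute)
    ultimately show ?thesis by linarith
  qed
  have hyp: "inner w (c - p) \<le> norm w * (4 * \<rho> * n\<^sup>2)" if "c \<in> {a, b}" for c
  proof -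
    have "inner w (c - p) \<le> \<rho> * norm w * (norm (c - p))\<^sup>2"
      using that a b R_pos by (intro hypomonotone[OF p _ w]) auto
    also have "\<dots> \<le> \<rho> * norm w * (2 * n)\<^sup>2"
      using end_dist[OF that] \<rho>_pos by (intro mult_left_mono power_mono) auto
    finally show ?thesis by (simp add: power_mult_distrib mult_ac)
  qed
  have "w = (1 - \<tau>) *\<^sub>R (a - p) + \<tau> *\<^sub>R (b - p)"
    by (simp add: w_def z_def algebra_simps)
  then have "(norm w)\<^sup>2 = (1 - \<tau>) * inner w (a - p) + \<tau> * inner w (b - p)"
    by (metis inner_add_right inner_scaleR_right power2_norm_eq_inner)
  also have "\<dots> \<le> (1 - \<tau>) * (norm w * (4 * \<rho> * n\<^sup>2)) + \<tau> * (norm w * (4 * \<rho> * n\<^sup>2))"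
    using \<tau> hyp by (intro add_mono mult_left_mono) auto
  finally have "norm w * norm w \<le> norm w * (4 * \<rho> * n\<^sup>2)"
    by (simp add: power2_eq_square algebra_simps)
  then show ?thesis
    using \<rho>_pos by (cases "w = 0") (auto simp: w_def p_def n_def)
qed

definition proj_chord :: "'a \<Rightarrow> 'a \<Rightarrow> real \<Rightarrow> 'a" where
  "proj_chord a b \<tau> = proj (a + \<tau> *\<^sub>R (b - a))"

definition chord_lip :: "real \<Rightarrow> real" where
  "chord_lip n = n / (1 - 8 * \<rho>\<^sup>2 * n\<^sup>2)"

lemma chord_lip_bounds:
  assumes "0 \<le> n" "16 * \<rho>\<^sup>2 * n\<^sup>2 \<le> 1"
  shows "n \<le> chord_lip n" "chord_lip n \<le> 2 * n"
proof -
  define d where "d = 1 - 8 * \<rho>\<^sup>2 * n\<^sup>2"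
  have d: "1/2 \<le> d" "d \<le> 1" using assms(2) by (auto simp: d_def)
  have "n * d \<le> n" using assms(1) d by (intro mult_right_le_one_le) auto
  moreover have "n * 1 \<le> n * (2 * d)" using assms(1) d by (intro mult_left_mono) auto
  moreover have "chord_lip n = n / d" by (simp add: chord_lip_def d_def)
  ultimately show "n \<le> chord_lip n" "chord_lip n \<le> 2 * n"
    using d by (simp_all add: le_divide_eq divide_le_eq mult_ac)
qed

lemma chord_lip_cubic:
  assumes "0 \<le> n" "n \<le> X" "16 * \<rho>\<^sup>2 * n\<^sup>2 \<le> 1" "X \<le> chord_lip n"
  shows "X \<le> n + (3 * \<rho>)\<^sup>2 * X^3"
proof -
  have "X * (1 - 8 * \<rho>\<^sup>2 * n\<^sup>2) \<le> n"
    using assms(3,4) by (simp add: chord_lip_def le_divide_eq)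
  then have "X \<le> n + 8 * \<rho>\<^sup>2 * n\<^sup>2 * X" by (simp add: algebra_simps)
  also have "8 * \<rho>\<^sup>2 * n\<^sup>2 * X \<le> 8 * \<rho>\<^sup>2 * X\<^sup>2 * X"
    using assms(1,2) by (intro mult_right_mono mult_left_mono power_mono) auto
  also have "\<dots> \<le> (3 * \<rho>)\<^sup>2 * X^3"
    using assms(1,2) by (simp add: power2_eq_square power3_eq_cube)
  finally show ?thesis by simp
qed

lemma proj_chord:
  assumes a: "a \<in> C \<inter> ball xb (R/2)" and b: "b \<in> C \<inter> ball xb (R/2)"
    and small: "16 * \<rho>\<^sup>2 * (norm (b - a))\<^sup>2 \<le> 1"
  shows "proj_chord a b 0 = a" "proj_chord a b 1 = b" "proj_chord a b ` {0..1} \<subseteq> K"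
    "(chord_lip (norm (b - a)))-lipschitz_on {0..1} (proj_chord a b)"
proof -
  have "a \<in> K" "b \<in> K" using a b ball_subset_K R_pos by auto
  then show "proj_chord a b 0 = a" "proj_chord a b 1 = b" "proj_chord a b ` {0..1} \<subseteq> K"
    by (auto simp: proj_chord_def proj_eq_self proj_in_K)
  define n where "n = norm (b - a)"
  have "norm (proj_chord a b s - proj_chord a b t) \<le> chord_lip n * \<bar>s - t\<bar>"
    if "s \<in> {0..1}" "t \<in> {0..1}" for s t
  proof -
    have u: "a + \<tau> *\<^sub>R (b - a) \<in> ball xb (R/2)" if "\<tau> \<in> {0..1}" for \<tau>
      using convexD_alt[OF convex_ball, of a xb "R/2" b \<tau>] a b that by (simp add: algebra_simps)
    have "8 * \<rho>\<^sup>2 * n\<^sup>2 < 1" using small by (simp add: n_def)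
    then have "norm (proj_chord a b s - proj_chord a b t)
        \<le> norm ((a + s *\<^sub>R (b - a)) - (a + t *\<^sub>R (b - a))) / (1 - 2 * \<rho> * (4 * \<rho> * n\<^sup>2))"
      unfolding proj_chord_def using that u chord_proj_dist[OF a b]
      by (intro proj_lipschitz) (auto simp: n_def power2_eq_square)
    also have "\<dots> = chord_lip n * \<bar>s - t\<bar>"
      by (simp add: chord_lip_def n_def power2_eq_square mult_ac flip: scaleR_diff_left)
    finally show ?thesis .
  qed
  moreover have "0 \<le> chord_lip n"
    using chord_lip_bounds(1)[of n] small norm_ge_zero[of "b - a"] unfolding n_def by linarith
  ultimately show "(chord_lip (norm (b - a)))-lipschitz_on {0..1} (proj_chord a b)"
    by (intro lipschitz_onI) (auto simp: dist_norm n_def)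
qed

section \<open>Arc-minimal curves\<close>

text \<open>The constants ensure that curves from \<open>ball xb \<delta>\<close> with Lipschitz constant below \<open>4 \<delta>\<close>
  stay in \<open>ball xb (R / 2)\<close>, and that chords of length at most \<open>4 \<delta>\<close> are short enough for the
  projection estimates (\<open>16 \<rho>\<^sup>2 n\<^sup>2 \<le> 1\<close>).\<close>

definition admissible_radius :: "real \<Rightarrow> bool" where
  "admissible_radius \<delta> \<longleftrightarrow> 0 < \<delta> \<and> \<delta> \<le> R / 10 \<and> 16 * \<rho> * \<delta> \<le> 1"

lemma admissible_radius_exists:
  assumes "0 < eps"
  obtains \<delta> where "admissible_radius \<delta>" "288 * \<rho> * \<delta> \<le> eps"
proof
  define \<delta> where "\<delta> = min (R / 10) (min (1 / (16 * \<rho>)) (eps / (288 * \<rho>)))"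
  have "16 * \<rho> * \<delta> \<le> 16 * \<rho> * (1 / (16 * \<rho>))"
    using \<rho>_pos by (intro mult_left_mono) (auto simp: \<delta>_def)
  moreover have "288 * \<rho> * \<delta> \<le> 288 * \<rho> * (eps / (288 * \<rho>))"
    using \<rho>_pos by (intro mult_left_mono) (auto simp: \<delta>_def)
  ultimately have "16 * \<rho> * \<delta> \<le> 1" "288 * \<rho> * \<delta> \<le> eps"
    using \<rho>_pos by simp_all
  moreover have "0 < \<delta>" "\<delta> \<le> R / 10" using R_pos \<rho>_pos assms by (auto simp: \<delta>_def)
  ultimately show "admissible_radius \<delta>" "288 * \<rho> * \<delta> \<le> eps"
    by (simp_all add: admissible_radius_def)
qed

lemma admissible_radius_small:
  assumes "admissible_radius \<delta>" "0 \<le> y" "y \<le> 4 * \<delta>"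
  shows "16 * \<rho>\<^sup>2 * y\<^sup>2 \<le> 1"
proof -
  have "4 * \<rho> * y \<le> 4 * \<rho> * (4 * \<delta>)" using assms(3) \<rho>_pos by (intro mult_left_mono) auto
  also have "\<dots> = 16 * \<rho> * \<delta>" by simp
  also have "\<dots> \<le> 1" using assms(1) by (simp add: admissible_radius_def)
  finally have "4 * \<rho> * y \<le> 1" .
  then have "(4 * \<rho> * y)\<^sup>2 \<le> 1" using assms(2) \<rho>_pos by (simp add: power_le_one)
  then show ?thesis by (simp add: power_mult_distrib)
qed

lemma norm_diff_lt_in_ball: "x \<in> ball xb \<delta> \<Longrightarrow> x' \<in> ball xb \<delta> \<Longrightarrow> norm (x' - x) < 2 * \<delta>"
  using dist_triangle[of x' x xb] by (simp add: dist_norm norm_minus_commute)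

lemma proj_chord_near:
  assumes \<delta>: "admissible_radius \<delta>" and x: "x \<in> C \<inter> ball xb \<delta>" "x' \<in> C \<inter> ball xb \<delta>"
  shows "proj_chord x x' 0 = x" "proj_chord x x' 1 = x'" "proj_chord x x' ` {0..1} \<subseteq> K"
    "(chord_lip (norm (x' - x)))-lipschitz_on {0..1} (proj_chord x x')"
    "chord_lip (norm (x' - x)) \<le> 2 * norm (x' - x)"
proof -
  have "0 < \<delta>" "\<delta> \<le> R / 10" using \<delta> by (auto simp: admissible_radius_def)
  then have xR: "x \<in> C \<inter> ball xb (R/2)" "x' \<in> C \<inter> ball xb (R/2)" using x by auto
  have small: "16 * \<rho>\<^sup>2 * (norm (x' - x))\<^sup>2 \<le> 1"
    using norm_diff_lt_in_ball[of x \<delta> x'] x \<open>0 < \<delta>\<close>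
    by (intro admissible_radius_small[OF \<delta>]) auto
  show "proj_chord x x' 0 = x" "proj_chord x x' 1 = x'" "proj_chord x x' ` {0..1} \<subseteq> K"
    "(chord_lip (norm (x' - x)))-lipschitz_on {0..1} (proj_chord x x')"
    using proj_chord[OF xR small] by blast+
  show "chord_lip (norm (x' - x)) \<le> 2 * norm (x' - x)"
    using chord_lip_bounds(2)[OF norm_ge_zero small] .
qed

text \<open>Comparing an arc with the projected chord between its end points shows that
  arc-minimal curves are almost straight.\<close>

definition arc_minimal :: "(real \<Rightarrow> 'a) \<Rightarrow> real \<Rightarrow> bool" where
  "arc_minimal g \<Lambda> \<longleftrightarrow> \<Lambda>-lipschitz_on {0..1} g \<and>
  (\<forall>s t (q :: real \<Rightarrow> 'a) M. 0 \<le> s \<and> s < t \<and> t \<le> 1 \<and> M-lipschitz_on {0..1} q \<and> q ` {0..1} \<subseteq> K \<and>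
     q 0 = g s \<and> q 1 = g t \<longrightarrow> \<Lambda> * (t - s) \<le> M)"

lemma arc_minimalD:
  fixes q :: "real \<Rightarrow> 'a"
  assumes "arc_minimal g \<Lambda>" "0 \<le> s" "s < t" "t \<le> 1"
    and "M-lipschitz_on {0..1} q" "q ` {0..1} \<subseteq> K" "q 0 = g s" "q 1 = g t"
  shows "\<Lambda> * (t - s) \<le> M"
  using assms unfolding arc_minimal_def by blast

lemma arc_minimal_le_chord_lip:
  assumes "arc_minimal g \<Lambda>" "0 \<le> s" "s < t" "t \<le> 1"
    and "g s \<in> C \<inter> ball xb (R/2)" "g t \<in> C \<inter> ball xb (R/2)" "16 * \<rho>\<^sup>2 * (norm (g t - g s))\<^sup>2 \<le> 1"
  shows "\<Lambda> * (t - s) \<le> chord_lip (norm (g t - g s))"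
  using arc_minimalD[OF assms(1-4) proj_chord(4,3,1,2)[OF assms(5-7)]] .

lemma arc_minimal_lipschitz_bound:
  assumes \<delta>: "admissible_radius \<delta>" and g: "arc_minimal g \<Lambda>" "g ` {0..1} \<subseteq> C"
    and ends: "g 0 \<in> ball xb \<delta>" "g 1 \<in> ball xb \<delta>"
  shows "\<Lambda> \<le> 2 * norm (g 1 - g 0)"
proof -
  have "g 0 \<in> C \<inter> ball xb \<delta>" "g 1 \<in> C \<inter> ball xb \<delta>" using g(2) ends by auto
  note q = proj_chord_near[OF \<delta> this]
  have "\<Lambda> * (1 - 0) \<le> chord_lip (norm (g 1 - g 0))"
    by (rule arc_minimalD[OF g(1) _ _ _ q(4,3,1,2)]) auto
  then show ?thesis using q(5) by simp
qed

lemma arc_minimal_almost_straight: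
  assumes \<delta>: "admissible_radius \<delta>" and g: "arc_minimal g \<Lambda>" "g ` {0..1} \<subseteq> C"
    and ends: "g 0 \<in> ball xb \<delta>" "g 1 \<in> ball xb \<delta>"
  shows "almost_straight g \<Lambda> (3 * \<rho>)"
proof -
  have "0 < \<delta>" "\<delta> \<le> R / 10" using \<delta> by (auto simp: admissible_radius_def)
  have lip: "\<Lambda>-lipschitz_on {0..1} g" using g(1) by (simp add: arc_minimal_def)
  then have "0 \<le> \<Lambda>" by (rule lipschitz_on_nonneg)
  have lip_norm: "norm (g t - g s) \<le> \<Lambda> * \<bar>t - s\<bar>" if "s \<in> {0..1}" "t \<in> {0..1}" for s t
    using lipschitz_on_normD[OF lip that(2,1)] by simp
  have "\<Lambda> < 4 * \<delta>"
    using arc_minimal_lipschitz_bound[OF assms] norm_diff_lt_in_ball[OF ends] by simp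
  have in_ball: "g t \<in> C \<inter> ball xb (R/2)" if "t \<in> {0..1}" for t
  proof -
    have "dist xb (g t) \<le> dist xb (g 0) + norm (g t - g 0)"
      using dist_triangle[of xb "g t" "g 0"] by (simp add: dist_norm norm_minus_commute)
    also have "\<dots> < \<delta> + 4 * \<delta>"
      using ends lip_norm[of 0 t] that \<open>\<Lambda> < 4 * \<delta>\<close> \<open>0 \<le> \<Lambda>\<close>
      by (intro add_strict_mono) (auto intro: le_less_trans mult_right_le_one_le)
    finally show ?thesis using that g(2) \<open>\<delta> \<le> R / 10\<close> by auto
  qed
  have reverse: "\<Lambda> * \<bar>t - s\<bar> \<le> norm (g t - g s) + (3 * \<rho>)\<^sup>2 * \<Lambda>^3 * \<bar>t - s\<bar>^3"
    if "s \<in> {0..1}" "t \<in> {0..1}" "s < t" for s t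
  proof -
    have "norm (g t - g s) \<le> \<Lambda> * (t - s)" using lip_norm[OF that(1,2)] that(3) by simp
    moreover have "\<Lambda> * (t - s) \<le> \<Lambda>" using that \<open>0 \<le> \<Lambda>\<close> by (intro mult_right_le_one_le) auto
    ultimately have "\<Lambda> * (t - s) \<le> norm (g t - g s) + (3 * \<rho>)\<^sup>2 * (\<Lambda> * (t - s))^3"
      using that \<open>\<Lambda> < 4 * \<delta>\<close> in_ball
      by (intro chord_lip_cubic admissible_radius_small[OF \<delta>] arc_minimal_le_chord_lip[OF g(1)]) auto
    then show ?thesis using that(3) by (simp add: power_mult_distrib mult.assoc)
  qed
  show "almost_straight g \<Lambda> (3 * \<rho>)"
  proof (unfold_locales)
    fix s t :: real assume "s \<in> {0..1}" "t \<in> {0..1}"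
    consider "s < t" | "s = t" | "t < s" by linarith
    then show "\<Lambda> * \<bar>t - s\<bar> \<le> norm (g t - g s) + (3 * \<rho>)\<^sup>2 * \<Lambda>^3 * \<bar>t - s\<bar>^3"
    proof cases
      case 3
      with reverse[OF \<open>t \<in> {0..1}\<close> \<open>s \<in> {0..1}\<close>] show ?thesis
        by (metis abs_minus_commute norm_minus_commute)
    qed (use reverse \<open>s \<in> {0..1}\<close> \<open>t \<in> {0..1}\<close> in auto)
  qed (use lip \<rho>_pos in auto)
qed

lemma arc_minimal_eps_path:
  assumes "admissible_radius \<delta>" "288 * \<rho> * \<delta> \<le> eps"
    and "arc_minimal g \<Lambda>" "g ` {0..1} \<subseteq> C" "g 0 \<in> ball xb \<delta>" "g 1 \<in> ball xb \<delta>"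
  shows "eps_path eps C (g 0) (g 1) g"
proof (rule almost_straight.eps_path[OF arc_minimal_almost_straight[OF assms(1,3-6)]])
  show "\<Lambda> \<le> 2 * norm (g 1 - g 0)" by (rule arc_minimal_lipschitz_bound[OF assms(1,3-6)])
  have "48 * (3 * \<rho>) * norm (g 1 - g 0) \<le> 48 * (3 * \<rho>) * (2 * \<delta>)"
    using norm_diff_lt_in_ball[OF assms(5,6)] \<rho>_pos by (intro mult_left_mono) auto
  also have "\<dots> = 288 * \<rho> * \<delta>" by simp
  finally show "48 * (3 * \<rho>) * norm (g 1 - g 0) \<le> eps" using assms(2) by linarith
qed (rule assms(4))

lemma intrinsic_dist_near_finite:
  assumes "admissible_radius \<delta>" "x \<in> C \<inter> ball xb \<delta>" "x' \<in> C \<inter> ball xb \<delta>"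
  shows "intrinsic_dist C x x' < \<infinity>"
proof -
  note q = proj_chord_near[OF assms]
  have "intrinsic_dist C x x' \<le> ennreal (chord_lip (norm (x' - x)))"
    using q(3) K_subset_C by (intro intrinsic_dist_le_lipschitz[OF q(4) _ q(1,2)]) auto
  then show ?thesis using le_less_trans[OF _ ennreal_less_top] by simp
qed

lemma averaging_map_arc_minimal:
  assumes \<delta>: "admissible_radius \<delta>" and x: "x \<in> C \<inter> ball xb \<delta>" "x' \<in> C \<inter> ball xb \<delta>"
    and \<gamma>: "averaging_map C x x' \<gamma>"
  shows "arc_minimal \<gamma> (enn2real (intrinsic_dist C x x'))"
proof -
  define \<Lambda> where "\<Lambda> = enn2real (intrinsic_dist C x x')"
  have d: "intrinsic_dist C x x' = ennreal \<Lambda>"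
    using intrinsic_dist_near_finite[OF assms(1-3)] by (simp add: \<Lambda>_def)
  have "0 \<le> \<Lambda>" by (simp add: \<Lambda>_def)
  have arc_dist: "intrinsic_dist C (\<gamma> s) (\<gamma> t) = ennreal (\<bar>s - t\<bar> * \<Lambda>)"
    if "s \<in> {0..1}" "t \<in> {0..1}" for s t
    using \<gamma> that \<open>0 \<le> \<Lambda>\<close> unfolding averaging_map_def d by (simp add: ennreal_mult)
  have "\<Lambda>-lipschitz_on {0..1} \<gamma>"
  proof (rule lipschitz_onI)
    fix s t :: real assume "s \<in> {0..1}" "t \<in> {0..1}"
    then have "ennreal (norm (\<gamma> s - \<gamma> t)) \<le> ennreal (\<bar>t - s\<bar> * \<Lambda>)"
      using intrinsic_dist_ge_norm[of "\<gamma> s" "\<gamma> t" C] arc_dist[of t s] by simp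
    then show "dist (\<gamma> s) (\<gamma> t) \<le> \<Lambda> * dist s t"
      using \<open>0 \<le> \<Lambda>\<close> by (simp add: dist_norm dist_real_def mult.commute abs_minus_commute)
  qed (rule \<open>0 \<le> \<Lambda>\<close>)
  moreover have "\<Lambda> * (t - s) \<le> M"
    if "0 \<le> s" "s < t" "t \<le> 1" "M-lipschitz_on {0..1} q" "q ` {0..1} \<subseteq> K" "q 0 = \<gamma> s" "q 1 = \<gamma> t"
    for s t M and q :: "real \<Rightarrow> 'a"
  proof -
    have "ennreal (\<Lambda> * (t - s)) = intrinsic_dist C (\<gamma> s) (\<gamma> t)"
      using arc_dist[of s t] that by (simp add: mult.commute)
    also have "\<dots> \<le> ennreal M"
      using that(5) K_subset_C by (intro intrinsic_dist_le_lipschitz[OF that(4) _ that(6,7)]) auto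
    finally show ?thesis using lipschitz_on_nonneg[OF that(4)] by simp
  qed
  ultimately show ?thesis by (auto simp: arc_minimal_def \<Lambda>_def)
qed

text \<open>Curves are pinned to \<open>xb\<close> outside \<open>[0, 1]\<close>, so that a family of them lies in a product
  of compact sets.\<close>

definition lip_curves :: "'a \<Rightarrow> 'a \<Rightarrow> real \<Rightarrow> (real \<Rightarrow> 'a) set" where
  "lip_curves x x' M = {h. (\<forall>\<tau>. h \<tau> \<in> (if \<tau> \<in> {0..1} then K else {xb})) \<and>
  h 0 = x \<and> h 1 = x' \<and> M-lipschitz_on {0..1} h}"

lemma lip_curvesD:
  assumes "h \<in> lip_curves x x' M"
  shows "M-lipschitz_on {0..1} h" "h ` {0..1} \<subseteq> K" "h 0 = x" "h 1 = x'"
proof -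
  have "\<forall>\<tau>. h \<tau> \<in> (if \<tau> \<in> {0..1} then K else {xb})"
    using assms unfolding lip_curves_def by blast
  then show "h ` {0..1} \<subseteq> K" by (metis image_subsetI)
  show "M-lipschitz_on {0..1} h" "h 0 = x" "h 1 = x'" using assms by (simp_all add: lip_curves_def)
qed

lemma pinned_in_lip_curves:
  assumes "M-lipschitz_on {0..1} h" "h ` {0..1} \<subseteq> K" "h 0 = x" "h 1 = x'"
  shows "(\<lambda>\<tau>. if \<tau> \<in> {0..1} then h \<tau> else xb) \<in> lip_curves x x' M"
proof -
  have "M-lipschitz_on {0..1} (\<lambda>\<tau>. if \<tau> \<in> {0..1} then h \<tau> else xb)"
    using assms(1) by (rule lipschitz_on_transform) simp
  then show ?thesis using assms xb_in_K by (auto simp: lip_curves_def)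
qed

lemma closed_lip_curves: "closed (lip_curves x x' M)"
proof -
  have eval: "continuous_on UNIV (\<lambda>h :: real \<Rightarrow> 'a. h \<tau>)" for \<tau>
    by (rule continuous_on_product_coordinates)
  have "{h :: real \<Rightarrow> 'a. M-lipschitz_on {0..1} h} = (if 0 \<le> M then
      \<Inter>\<sigma>\<in>{0..1}. \<Inter>\<tau>\<in>{0..1}. {h. dist (h \<sigma>) (h \<tau>) \<le> M * dist \<sigma> \<tau>} else {})"
    by (auto simp: lipschitz_on_def)
  then have "closed {h :: real \<Rightarrow> 'a. M-lipschitz_on {0..1} h}"
    by (auto intro!: closed_Collect_le continuous_on_dist eval continuous_on_const)
  moreover have "closed (\<Inter>\<tau> :: real. (\<lambda>h. h \<tau>) -` (if \<tau> \<in> {0..1} then K else {xb}))"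
    using compact_K by (intro closed_INT ballI closed_vimage eval compact_imp_closed) auto
  moreover have "closed {h :: real \<Rightarrow> 'a. h 0 = x}" "closed {h :: real \<Rightarrow> 'a. h 1 = x'}"
    by (rule closed_Collect_eq[OF eval continuous_on_const])+
  moreover have "lip_curves x x' M = (\<Inter>\<tau>. (\<lambda>h. h \<tau>) -` (if \<tau> \<in> {0..1} then K else {xb}))
      \<inter> {h. h 0 = x} \<inter> {h. h 1 = x'} \<inter> {h. M-lipschitz_on {0..1} h}"
    unfolding lip_curves_def by blast
  ultimately show ?thesis by (simp add: closed_Int)
qed

lemma compact_lip_curves: "compact (lip_curves x x' M)"
proof -
  define S where "S \<tau> = (if \<tau> \<in> {0..1} then K else {xb})" for \<tau> :: real
  have "compact (S \<tau>)" for \<tau> using compact_K by (simp add: S_def)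
  then have "compactin (product_topology (\<lambda>_. euclidean) UNIV) (PiE UNIV S)"
    by (simp add: compactin_PiE)
  then have "compact (PiE UNIV S)"
    by (metis euclidean_product_topology compactin_euclidean_iff)
  moreover have "lip_curves x x' M = PiE UNIV S \<inter> lip_curves x x' M"
    unfolding lip_curves_def S_def PiE_UNIV_domain Pi_def by blast
  ultimately show ?thesis
    using closed_lip_curves by (metis compact_Int_closed)
qed

lemma lip_curves_mono: "M \<le> M' \<Longrightarrow> lip_curves x x' M \<subseteq> lip_curves x x' M'"
  by (auto simp: lip_curves_def intro: lipschitz_on_le)

text \<open>A decreasing sequence of nonempty compact families has a common member; its
  Lipschitz constant is the limit of the constants.\<close>

lemma lip_curves_limit:
  assumes "\<And>n. lip_curves x x' (\<Lambda> + 1 / real (Suc n)) \<noteq> {}" "0 \<le> \<Lambda>"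
  shows "lip_curves x x' \<Lambda> \<noteq> {}"
proof -
  define F where "F n = lip_curves x x' (\<Lambda> + 1 / real (Suc n))" for n
  have F_mono: "F n \<subseteq> F m" if "m \<le> n" for m n
    unfolding F_def using that by (intro lip_curves_mono) (simp add: frac_le)
  have "F 0 \<inter> (\<Inter>n\<in>UNIV. F n) \<noteq> {}"
  proof (rule compact_imp_fip_image)
    show "compact (F 0)" by (simp add: F_def compact_lip_curves)
    show "closed (F n)" for n by (simp add: F_def closed_lip_curves)
    fix I :: "nat set" assume "finite I"
    then obtain N where "\<forall>n\<in>I. n \<le> N" using finite_nat_set_iff_bounded_le by blast
    then have "F N \<subseteq> F 0 \<inter> (\<Inter>n\<in>I. F n)" using F_mono by blast
    moreover have "F N \<noteq> {}" using assms(1) by (simp add: F_def)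
    ultimately show "F 0 \<inter> (\<Inter>n\<in>I. F n) \<noteq> {}" by blast
  qed
  then obtain g where g: "\<And>n. g \<in> F n" by blast
  have "dist (g \<sigma>) (g \<tau>) \<le> \<Lambda> * dist \<sigma> \<tau>" if "\<sigma> \<in> {0..1}" "\<tau> \<in> {0..1}" for \<sigma> \<tau>
  proof (rule field_le_epsilon)
    fix e :: real assume "0 < e"
    then obtain n where "1 / real (Suc n) < e" using nat_approx_posE by blast
    have "dist (g \<sigma>) (g \<tau>) \<le> (\<Lambda> + 1 / real (Suc n)) * dist \<sigma> \<tau>"
      using lipschitz_onD[OF lip_curvesD(1)[OF g[of n, unfolded F_def]] that] .
    moreover have "1 / real (Suc n) * dist \<sigma> \<tau> \<le> 1 / real (Suc n)"
      using that by (intro mult_right_le_one_le) (auto simp: dist_real_def)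
    ultimately show "dist (g \<sigma>) (g \<tau>) \<le> \<Lambda> * dist \<sigma> \<tau> + e"
      using \<open>1 / real (Suc n) < e\<close> by (simp add: distrib_right)
  qed
  then have "\<Lambda>-lipschitz_on {0..1} g" using assms(2) by (intro lipschitz_onI)
  moreover from g[of 0] have "(\<forall>\<tau>. g \<tau> \<in> (if \<tau> \<in> {0..1} then K else {xb})) \<and> g 0 = x \<and> g 1 = x'"
    unfolding F_def lip_curves_def mem_Collect_eq by blast
  ultimately have "g \<in> lip_curves x x' \<Lambda>"
    unfolding lip_curves_def mem_Collect_eq by blast
  then show ?thesis by blast
qed

lemma min_lip_curve_exists:
  assumes "lip_curves x x' M0 \<noteq> {}"
  obtains g \<Lambda> where "g \<in> lip_curves x x' \<Lambda>" "\<And>M. lip_curves x x' M \<noteq> {} \<Longrightarrow> \<Lambda> \<le> M"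
proof -
  define \<Lambda> where "\<Lambda> = Inf {M. lip_curves x x' M \<noteq> {}}"
  have nonneg: "0 \<le> M" if "lip_curves x x' M \<noteq> {}" for M
    using that lip_curvesD(1) lipschitz_on_nonneg by blast
  then have "bdd_below {M. lip_curves x x' M \<noteq> {}}" by (intro bdd_belowI[of _ 0]) auto
  then have lower: "\<Lambda> \<le> M" if "lip_curves x x' M \<noteq> {}" for M
    unfolding \<Lambda>_def using that by (intro cInf_lower) auto
  have "lip_curves x x' (\<Lambda> + 1 / real (Suc n)) \<noteq> {}" for n
  proof -
    obtain M where "lip_curves x x' M \<noteq> {}" "M < \<Lambda> + 1 / real (Suc n)"
      using cInf_lessD[of "{M. lip_curves x x' M \<noteq> {}}" "\<Lambda> + 1 / real (Suc n)"] assms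
      by (auto simp: \<Lambda>_def)
    then show ?thesis using lip_curves_mono[of M "\<Lambda> + 1 / real (Suc n)" x x'] by auto
  qed
  moreover have "0 \<le> \<Lambda>" unfolding \<Lambda>_def using assms nonneg by (intro cInf_greatest) auto
  ultimately have "lip_curves x x' \<Lambda> \<noteq> {}" by (rule lip_curves_limit)
  then show ?thesis using lower that by blast
qed

text \<open>Replacing an arc of a curve of minimal Lipschitz constant by a competitor \<open>q\<close> and
  reparametrising proportionally to the constants yields a curve with constant
  \<open>\<Lambda> s + M + \<Lambda> (1 - t)\<close>, which cannot be smaller than \<open>\<Lambda>\<close>.\<close>

lemma min_lip_curve_arc_minimal:
  assumes g: "g \<in> lip_curves x x' \<Lambda>" and min: "\<And>M. lip_curves x x' M \<noteq> {} \<Longrightarrow> \<Lambda> \<le> M"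
  shows "arc_minimal g \<Lambda>"
proof -
  have lip: "\<Lambda>-lipschitz_on {0..1} g" and g_K: "g ` {0..1} \<subseteq> K" and ends: "g 0 = x" "g 1 = x'"
    using lip_curvesD[OF g] by auto
  have "\<Lambda> * (t - s) \<le> M"
    if st: "0 \<le> s" "s < t" "t \<le> 1" and q: "M-lipschitz_on {0..1} q" "q ` {0..1} \<subseteq> K"
      and q_ends: "q 0 = g s" "q 1 = g t" for s t M and q :: "real \<Rightarrow> 'a"
  proof -
    define g1 where "g1 = (\<lambda>\<sigma>. g (s * \<sigma>))"
    define g3 where "g3 = (\<lambda>\<sigma>. g ((1 - t) * \<sigma> + t))"
    have maps: "s * \<sigma> \<in> {0..1}" "(1 - t) * \<sigma> + t \<in> {0..1}" if "\<sigma> \<in> {0..1}" for \<sigma>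
      using st that mult_right_le_one_le[of "1 - t" \<sigma>] by (auto intro: mult_le_one)
    have "(\<Lambda> * s)-lipschitz_on {0..1} (\<lambda>\<sigma>. g (s * \<sigma> - 0))"
      using st maps by (intro lipschitz_on_compose_affine[OF lip]) auto
    then have g1: "(\<Lambda> * s)-lipschitz_on {0..1} g1" "g1 ` {0..1} \<subseteq> K" "g1 0 = x" "g1 1 = g s"
      using g_K maps ends by (auto simp: g1_def)
    have "(\<Lambda> * (1 - t))-lipschitz_on {0..1} (\<lambda>\<sigma>. g ((1 - t) * \<sigma> - - t))"
      using st maps by (intro lipschitz_on_compose_affine[OF lip]) auto
    then have g3: "(\<Lambda> * (1 - t))-lipschitz_on {0..1} g3" "g3 ` {0..1} \<subseteq> K" "g3 0 = g t" "g3 1 = x'"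
      using g_K maps ends by (auto simp: g3_def)
    define j where "j = join_at (\<Lambda> * s / (\<Lambda> * s + M)) g1 q"
    have j: "(\<Lambda> * s + M)-lipschitz_on {0..1} j" "j 0 = x" "j 1 = g t" "j ` {0..1} \<subseteq> K"
      using lipschitz_join_proportional[OF g1(1) q(1)] g1 q q_ends by (auto simp: j_def)
    define h where "h = join_at ((\<Lambda> * s + M) / (\<Lambda> * s + M + \<Lambda> * (1 - t))) j g3"
    have "(\<Lambda> * s + M + \<Lambda> * (1 - t))-lipschitz_on {0..1} h" "h ` {0..1} \<subseteq> K" "h 0 = x" "h 1 = x'"
      using lipschitz_join_proportional[OF j(1) g3(1)] j g3 by (auto simp: h_def)
    then have "lip_curves x x' (\<Lambda> * s + M + \<Lambda> * (1 - t)) \<noteq> {}"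
      using pinned_in_lip_curves by blast
    then have "\<Lambda> \<le> \<Lambda> * s + M + \<Lambda> * (1 - t)" by (rule min)
    then show ?thesis by (simp add: algebra_simps)
  qed
  with lip show ?thesis by (auto simp: arc_minimal_def)
qed

lemma arc_minimal_curve_exists:
  assumes \<delta>: "admissible_radius \<delta>" and x: "x \<in> C \<inter> ball xb \<delta>" "x' \<in> C \<inter> ball xb \<delta>"
  obtains g \<Lambda> where "arc_minimal g \<Lambda>" "g ` {0..1} \<subseteq> C" "g 0 = x" "g 1 = x'"
proof -
  note q = proj_chord_near[OF assms]
  have "lip_curves x x' (chord_lip (norm (x' - x))) \<noteq> {}"
    using pinned_in_lip_curves[OF q(4,3,1,2)] by blast
  then obtain g \<Lambda> where "g \<in> lip_curves x x' \<Lambda>" "\<And>M. lip_curves x x' M \<noteq> {} \<Longrightarrow> \<Lambda> \<le> M"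
    using min_lip_curve_exists by blast
  moreover from lip_curvesD[OF this(1)] have "g ` {0..1} \<subseteq> C" "g 0 = x" "g 1 = x'"
    using K_subset_C by auto
  ultimately show ?thesis using min_lip_curve_arc_minimal that by blast
qed

lemma smoothly_approx_convex: "smoothly_approx_convex_at C xb"
  unfolding smoothly_approx_convex_at_def
proof (intro allI impI)
  fix eps :: real assume "eps > 0"
  then obtain \<delta> where \<delta>: "admissible_radius \<delta>" "288 * \<rho> * \<delta> \<le> eps"
    by (rule admissible_radius_exists)
  have "\<exists>\<gamma>. eps_path eps C x x' \<gamma>" if x: "x \<in> C \<inter> ball xb \<delta>" "x' \<in> C \<inter> ball xb \<delta>" for x x'
  proof -
    obtain g \<Lambda> where g: "arc_minimal g \<Lambda>" "g ` {0..1} \<subseteq> C" "g 0 = x" "g 1 = x'"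
      using arc_minimal_curve_exists[OF \<delta>(1) x] .
    then have "eps_path eps C (g 0) (g 1) g"
      using x by (intro arc_minimal_eps_path[OF \<delta>]) auto
    then show ?thesis using g by blast
  qed
  moreover have "xb \<in> ball xb \<delta>" using \<delta>(1) by (simp add: admissible_radius_def)
  ultimately show "\<exists>W. open W \<and> xb \<in> W \<and> (\<forall>x\<in>C \<inter> W. \<forall>x'\<in>C \<inter> W. \<exists>\<gamma>. eps_path eps C x x' \<gamma>)"
    by (intro exI[of _ "ball xb \<delta>"]) auto
qed

lemma averaging_maps_are_eps_paths:
  assumes "eps > 0"
  obtains \<delta> where "\<delta> > 0" "\<And>x x' \<gamma>. x \<in> C \<inter> ball xb \<delta> \<Longrightarrow> x' \<in> C \<inter> ball xb \<delta> \<Longrightarrow>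
    averaging_map C x x' \<gamma> \<Longrightarrow> eps_path eps C x x' \<gamma>"
proof -
  obtain \<delta> where \<delta>: "admissible_radius \<delta>" "288 * \<rho> * \<delta> \<le> eps"
    using admissible_radius_exists[OF assms] .
  have "eps_path eps C x x' \<gamma>"
    if "x \<in> C \<inter> ball xb \<delta>" "x' \<in> C \<inter> ball xb \<delta>" "averaging_map C x x' \<gamma>" for x x' \<gamma>
    using arc_minimal_eps_path[OF \<delta> averaging_map_arc_minimal[OF \<delta>(1) that]] that
    by (auto simp: averaging_map_def)
  moreover have "\<delta> > 0" using \<delta>(1) by (simp add: admissible_radius_def)
  ultimately show ?thesis using that by blast
qed

end

theorem theorem3p19:
  fixes C :: "'a::euclidean_space set" and xb :: 'a
  assumes "xb \<in> C" and "prox_regular_at C xb"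
  shows "smoothly_approx_convex_at C xb \<and>
         (\<forall>eps>0. \<exists>\<delta>>0. \<forall>x\<in>C \<inter> ball xb \<delta>. \<forall>x'\<in>C \<inter> ball xb \<delta>.
            \<forall>\<gamma>. averaging_map C x x' \<gamma> \<longrightarrow> eps_path eps C x x' \<gamma>)"
proof -
  obtain R \<rho> where "hypomonotone_near C xb R \<rho>"
    using prox_regular_at_imp_hypomonotone_near[OF assms] .
  then interpret hypomonotone_near C xb R \<rho> .
  show ?thesis
    using smoothly_approx_convex averaging_maps_are_eps_paths by metis
qed

end
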